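(* Let $A\in\mathbb{C}^{n\times n}$, $B\in\mathbb{C}^{n\times m}$, $C\in\mathbb{C}^{p\times n}$, $D\in\mathbb{C}^{p\times m}$ and $F\in\mathbb{C}^{\nu\times\nu}$, and suppose $\mathrm{eig}(A)\cap\mathrm{eig}(F)=\emptyset$. The following statements are equivalent: (i) $\mathcal{R}_\Sigma(\lambda)$ has full column rank $n+m$ for all $\lambda\in\mathrm{eig}(F)$; (ii) for every pair $(P,Q)\in\mathbb{C}^{n\times\nu}\times\mathbb{C}^{p\times\nu}$ for which the system $$\Pi F = A\Pi + B\Psi + P,\qquad 0 = C\Pi + D\Psi + Q$$ admits a solution $(\Pi,\Psi)\in\mathbb{C}^{n\times\nu}\times\mathbb{C}^{m\times\nu}$, this solution is unique; (iii) for every pair $(\bar P,\bar Q)\in\mathbb{C}^{\nu\times n}\times\mathbb{C}^{\nu\times m}$, the system $$MA = FM + GC + \bar P,\qquad 0 = -MB + GD + \bar Q$$ admits a solution $(M,G)\in\mathbb{C}^{\nu\times n}\times\mathbb{C}^{\nu\times p}$; (iv) $\mathcal{C}_{\rm p}:\mathbb{C}^{m\times\nu}\to\mathbb{C}^{p\times\nu}$ is injective; (v) $\mathcal{C}_{\rm d}:\mathbb{C}^{\nu\times p}\to\mathbb{C}^{\nu\times m}$ is surjective. Moreover, for any $H\in\mathbb{C}^{m\times\nu}$: (a) if $(F,H)$ is observable and (i) holds, then $(F,\mathcal{C}_{\rm p}(H))$ is observable; (b) if $(F,H)$ is detectable and $\mathcal{R}_\Sigma(\lambda)$ has full column rank for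 all $\lambda\in\mathrm{eig}(F)\cap\mathbb{C}_{\geq 0}$, then $(F,\mathcal{C}_{\rm p}(H))$ is detectable. Furthermore, the converse of (a) holds provided $H\ker(\lambda I_\nu-F)=\mathbb{C}^m$ for all $\lambda\in\mathrm{eig}(F)$, and the converse of (b) holds provided $H\ker(\lambda I_\nu-F)=\mathbb{C}^m$ for all $\lambda\in\mathrm{eig}(F)\cap\mathbb{C}_{\geq 0}$.
   Context: Data: $A\in\mathbb{C}^{n\times n}$, $B\in\mathbb{C}^{n\times m}$, $C\in\mathbb{C}^{p\times n}$, $D\in\mathbb{C}^{p\times m}$, $F\in\mathbb{C}^{\nu\times\nu}$, with $\mathrm{eig}(A)\cap\mathrm{eig}(F)=\emptyset$. The Rosenbrock system matrix is $\mathcal{R}_\Sigma(\lambda)=\begin{bmatrix}A-\lambda I_n & B\\ C & D\end{bmatrix}\in\mathbb{C}^{(n+p)\times(n+m)}$ for $\lambda\in\mathbb{C}$. The steady-state cascade (SSC) operators are defined as follows: for $H\in\mathbb{C}^{m\times\nu}$, $\mathcal{C}_{\rm p}(H)=C\Pi+DH$, where $\Pi\in\mathbb{C}^{n\times\nu}$ is the unique solution of the Sylvester equation $\Pi F - A\Pi = BH$; for $G\in\mathbb{C}^{\nu\times p}$, $\mathcal{C}_{\rm d}(G)=-MB+GD$, where $M\in\mathbb{C}^{\nu\times n}$ is the unique solution of $MA-FM=GC$. $\mathbb{C}_{\geq 0}$ is the set of complex numbers with nonnegative real part. For a matrix $H$ and subspace $\mathcal{V}$, $H\mathcal{V}=\{Hv:v\in\mathcal{V}\}$.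 A pair $(F,H)$ is detectable if every eigenvalue $\lambda$ of $F$ with $\mathrm{Re}\,\lambda\ge0$ is observable, i.e., $Hf\neq 0$ for every nonzero $f$ with $Ff=\lambda f$. *)

theory Defs
  imports "Jordan_Normal_Form.DL_Rank" "Jordan_Normal_Form.Char_Poly"
begin

definition eig :: "complex mat \<Rightarrow> complex set" where
  "eig F = {lam. eigenvalue F lam}"

definition rosenbrock :: "complex mat \<Rightarrow> complex mat \<Rightarrow> complex mat \<Rightarrow> complex mat \<Rightarrow> complex \<Rightarrow> complex mat" where
  "rosenbrock A B C D lam = four_block_mat (A - lam \<cdot>\<^sub>m 1\<^sub>m (dim_row A)) B C D"

definition full_col_rank :: "complex mat \<Rightarrow> bool" where
  "full_col_rank R = (vec_space.rank (dim_row R) R = dim_col R)"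

definition SSC_p :: "complex mat \<Rightarrow> complex mat \<Rightarrow> complex mat \<Rightarrow> complex mat \<Rightarrow> complex mat \<Rightarrow> complex mat \<Rightarrow> complex mat" where
  "SSC_p A B C D F H =
     (let Pi = (THE Pi. Pi \<in> carrier_mat (dim_row A) (dim_row F) \<and> Pi * F - A * Pi = B * H)
      in C * Pi + D * H)"

definition SSC_d :: "complex mat \<Rightarrow> complex mat \<Rightarrow> complex mat \<Rightarrow> complex mat \<Rightarrow> complex mat \<Rightarrow> complex mat \<Rightarrow> complex mat" where
  "SSC_d A B C D F G =
     (let M = (THE M. M \<in> carrier_mat (dim_row F) (dim_row A) \<and> M * A - F * M = G * C)
      in - (M * B) + G * D)"

definition observable_pair :: "complex mat \<Rightarrow> complex mat \<Rightarrow> bool" where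
  "observable_pair F H = (\<forall>lam f. eigenvector F f lam \<longrightarrow> H *\<^sub>v f \<noteq> 0\<^sub>v (dim_row H))"

definition detectable_pair :: "complex mat \<Rightarrow> complex mat \<Rightarrow> bool" where
  "detectable_pair F H = (\<forall>lam f. Re lam \<ge> 0 \<longrightarrow> eigenvector F f lam \<longrightarrow> H *\<^sub>v f \<noteq> 0\<^sub>v (dim_row H))"

definition eigspace :: "complex mat \<Rightarrow> complex \<Rightarrow> complex vec set" where
  "eigspace F lam = {f \<in> carrier_vec (dim_row F). (lam \<cdot>\<^sub>m 1\<^sub>m (dim_row F) - F) *\<^sub>v f = 0\<^sub>v (dim_row F)}"

end

theory Submission
  imports Defs "Jordan_Normal_Form.Schur_Decomposition"
begin

text \<open>If \<open>f\<close> is an eigenvector of \<open>F\<close> for \<open>\<lambda>\<close>, the Sylvester equation \<open>\<Pi> F - A \<Pi> = B H\<close> turns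
  \<open>(\<Pi> f, H f)\<close> into a vector annihilated by the first block row of \<open>R\<^sub>\<Sigma>(\<lambda>)\<close>, while the second
  block row yields \<open>C\<^sub>p(H) f\<close>; this gives the observability and detectability statements.
  Conversely, a kernel vector \<open>(x, u)\<close> of \<open>R\<^sub>\<Sigma>(\<lambda>)\<close> together with a left eigenvector \<open>w\<close> of \<open>F\<close>
  gives the rank-one solution \<open>(x w\<^sup>T, u w\<^sup>T)\<close> of the homogeneous regulator equations, which
  destroys uniqueness, injectivity of \<open>C\<^sub>p\<close> and surjectivity of \<open>C\<^sub>d\<close>.
  If \<open>R\<^sub>\<Sigma>\<close> is injective at all eigenvalues of \<open>F\<close>, a Schur triangularisation of \<open>F\<close> splits
  the regulator equations into one vector equation per column, governed by \<open>R\<^sub>\<Sigma>\<close> at a diagonal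
  entry of the triangular form, i.e. at an eigenvalue of \<open>F\<close>: this gives uniqueness, and
  applied to the transposed system (whose matrix \<open>R\<^sub>\<Sigma>(\<lambda>)\<^sup>T\<close> is surjective) solvability.\<close>

section \<open>Linear algebra preliminaries\<close>

lemma smult_one_mult_mat_vec:
  "(x :: 'a :: comm_ring_1 vec) \<in> carrier_vec n \<Longrightarrow> (c \<cdot>\<^sub>m 1\<^sub>m n) *\<^sub>v x = c \<cdot>\<^sub>v x"
proof (rule eq_vecI)
  fix i assume x: "x \<in> carrier_vec n" and i: "i < dim_vec (c \<cdot>\<^sub>v x)"
  then have "((c \<cdot>\<^sub>m 1\<^sub>m n) *\<^sub>v x) $ i = (\<Sum>k = 0..<n. c * (if k = i then 1 else 0) * x $ k)"
    by (auto simp: scalar_prod_def)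
  also have "\<dots> = (\<Sum>k\<in>{0..<n}. if k = i then c * x $ k else 0)"
    by (rule sum.cong) auto
  finally show "((c \<cdot>\<^sub>m 1\<^sub>m n) *\<^sub>v x) $ i = (c \<cdot>\<^sub>v x) $ i"
    using x i by simp
qed auto

lemma mult_mat_vec_zero [simp]: "M \<in> carrier_mat r k \<Longrightarrow> M *\<^sub>v 0\<^sub>v k = (0\<^sub>v r :: 'a :: semiring_0 vec)"
  by (intro eq_vecI) auto

lemma mult_mat_vec_uminus:
  "(M :: 'a :: comm_ring_1 mat) \<in> carrier_mat r k \<Longrightarrow> v \<in> carrier_vec k \<Longrightarrow> M *\<^sub>v (- v) = - (M *\<^sub>v v)"
  by (intro eq_vecI) (auto simp: scalar_prod_uminus_right)

lemma minus_smult_one_mult_mat_vec: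
  fixes A :: "'a :: comm_ring_1 mat"
  assumes "A \<in> carrier_mat n n" and "x \<in> carrier_vec n"
  shows "(A - c \<cdot>\<^sub>m 1\<^sub>m n) *\<^sub>v x = A *\<^sub>v x - c \<cdot>\<^sub>v x"
  using assms by (simp add: minus_mult_distrib_mat_vec smult_one_mult_mat_vec)

lemma mult_minus_smult_one_eq_iff:
  fixes A :: "'a :: comm_ring_1 mat"
  assumes "A \<in> carrier_mat n n" and "x \<in> carrier_vec n" and "b \<in> carrier_vec n"
  shows "(A - c \<cdot>\<^sub>m 1\<^sub>m n) *\<^sub>v x = b \<longleftrightarrow> A *\<^sub>v x = c \<cdot>\<^sub>v x + b"
  unfolding minus_smult_one_mult_mat_vec[OF assms(1,2)]
  using assms by (auto simp: vec_eq_iff algebra_simps simp del: index_mult_mat_vec)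

lemma mem_eig_iff:
  fixes A :: "complex mat" assumes "A \<in> carrier_mat n n"
  shows "lam \<in> eig A \<longleftrightarrow> (\<exists>v\<in>carrier_vec n. v \<noteq> 0\<^sub>v n \<and> A *\<^sub>v v = lam \<cdot>\<^sub>v v)"
  using assms unfolding eig_def eigenvalue_def eigenvector_def by auto

lemma eig_transpose_mat:
  fixes A :: "complex mat" assumes A: "A \<in> carrier_mat n n"
  shows "eig (transpose_mat A) = eig A"
  using eigenvalue_root_char_poly[OF A] eigenvalue_root_char_poly[of "transpose_mat A" n] A
  unfolding eig_def by auto

lemma eigspaceD:
  assumes "F \<in> carrier_mat \<nu> \<nu>" and "f \<in> eigspace F lam"
  shows "f \<in> carrier_vec \<nu>" and "F *\<^sub>v f = lam \<cdot>\<^sub>v f"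
proof -
  show f: "f \<in> carrier_vec \<nu>" using assms unfolding eigspace_def by auto
  have "lam \<cdot>\<^sub>v f - F *\<^sub>v f = 0\<^sub>v \<nu>"
    using assms f minus_mult_distrib_mat_vec[of "lam \<cdot>\<^sub>m 1\<^sub>m \<nu>" \<nu> \<nu> F f]
    unfolding eigspace_def by (simp add: smult_one_mult_mat_vec)
  then show "F *\<^sub>v f = lam \<cdot>\<^sub>v f"
    using assms(1) f by (auto simp: vec_eq_iff)
qed

lemma (in vec_space) rank_less_if_not_distinct_cols:
  assumes "A \<in> carrier_mat n nc" and "\<not> distinct (cols A)"
  shows "rank A < nc"
proof -
  obtain S where S: "maximal S (\<lambda>T. T \<subseteq> set (cols A) \<and> lin_indpt T)"
    using maximal_exists[of "(\<lambda>T. T \<subseteq> set (cols A) \<and> lin_indpt T)" "card (set (cols A))" "{}"]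
    by (meson List.finite_set card_mono empty_iff empty_subsetI finite_lin_indpt2 rev_finite_subset)
  then have "card S \<le> card (set (cols A))" by (simp add: card_mono maximal_def)
  also have "\<dots> < length (cols A)"
    using assms(2) card_length[of "cols A"] card_distinct[of "cols A"] by linarith
  also have "\<dots> = nc" using assms(1) by simp
  finally show ?thesis using rank_card_indpt[OF assms(1) S] by simp
qed

lemma distinct_cols_if_trivial_kernel:
  fixes R :: "'a :: comm_ring_1 mat"
  assumes R: "R \<in> carrier_mat r c" and K: "\<forall>v\<in>carrier_vec c. R *\<^sub>v v = 0\<^sub>v r \<longrightarrow> v = 0\<^sub>v c"
  shows "distinct (cols R)"
proof (rule ccontr)
  assume "\<not> distinct (cols R)"
  then obtain i j where ij: "i \<noteq> j" "i < c" "j < c" "col R i = col R j"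
    using R by (auto simp: distinct_conv_nth)
  define v :: "'a vec" where "v = unit_vec c i - unit_vec c j"
  have v: "v \<in> carrier_vec c" unfolding v_def by auto
  have "R *\<^sub>v unit_vec c k = col R k" if "k < c" for k
    using R that by (intro eq_vecI) auto
  then have "R *\<^sub>v v = col R i - col R j"
    unfolding v_def using R ij by (simp add: mult_minus_distrib_mat_vec)
  then have "R *\<^sub>v v = 0\<^sub>v r" using ij(4) R by auto
  moreover have "v $ i = 1" unfolding v_def using ij by simp
  ultimately show False using K v ij(2) by auto
qed

lemma full_col_rank_iff_trivial_kernel:
  fixes R :: "complex mat" assumes R: "R \<in> carrier_mat r c"
  shows "full_col_rank R \<longleftrightarrow> (\<forall>v\<in>carrier_vec c. R *\<^sub>v v = 0\<^sub>v r \<longrightarrow> v = 0\<^sub>v c)"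
proof -
  interpret vec_space "TYPE(complex)" r .
  have rank: "full_col_rank R \<longleftrightarrow> rank R = c" unfolding full_col_rank_def using R by auto
  show ?thesis
  proof
    assume "full_col_rank R"
    then have rk: "rank R = c" using rank by blast
    then have dist: "distinct (cols R)" using rank_less_if_not_distinct_cols[OF R] by force
    have indpt: "lin_indpt (set (cols R))" by (rule full_rank_lin_indpt[OF R rk dist])
    show "\<forall>v\<in>carrier_vec c. R *\<^sub>v v = 0\<^sub>v r \<longrightarrow> v = 0\<^sub>v c"
    proof (intro ballI impI, rule ccontr)
      fix v assume "v \<in> carrier_vec c" "R *\<^sub>v v = 0\<^sub>v r" "v \<noteq> 0\<^sub>v c"
      from lin_depI[OF R this(1) this(3) this(2) dist] indpt show False by simp
    qed
  next
    assume K: "\<forall>v\<in>carrier_vec c. R *\<^sub>v v = 0\<^sub>v r \<longrightarrow> v = 0\<^sub>v c"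
    then have dist: "distinct (cols R)" by (rule distinct_cols_if_trivial_kernel[OF R])
    have "lin_indpt (set (cols R))"
    proof
      assume "lin_dep (set (cols R))"
      then obtain v where "v \<in> carrier_vec c" "v \<noteq> 0\<^sub>v c" "R *\<^sub>v v = 0\<^sub>v r"
        by (rule lin_depE[OF R _ dist])
      with K show False by simp
    qed
    then show "full_col_rank R" using lin_indpt_full_rank[OF R dist] rank by simp
  qed
qed

lemma square_mat_solvable_if_trivial_kernel:
  fixes A :: "complex mat"
  assumes A: "A \<in> carrier_mat n n" and K: "\<forall>v\<in>carrier_vec n. A *\<^sub>v v = 0\<^sub>v n \<longrightarrow> v = 0\<^sub>v n"
    and b: "b \<in> carrier_vec n"
  shows "\<exists>x\<in>carrier_vec n. A *\<^sub>v x = b"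
proof -
  have "det A \<noteq> 0" using det_0_iff_vec_prod_zero_field[OF A] K by blast
  from det_non_zero_imp_unit[OF A this]
  obtain A' where A': "A' \<in> carrier_mat n n" "A * A' = 1\<^sub>m n"
    unfolding Units_def ring_mat_simps by auto
  then have "A *\<^sub>v (A' *\<^sub>v b) = b"
    using A b assoc_mult_mat_vec[OF A A'(1) b] by simp
  moreover have "A' *\<^sub>v b \<in> carrier_vec n" using A'(1) b by simp
  ultimately show ?thesis by blast
qed

lemma map_conjugate_mult_mat_vec:
  fixes R :: "complex mat" assumes R: "R \<in> carrier_mat r c" and v: "v \<in> carrier_vec c"
  shows "map_mat conjugate R *\<^sub>v v = conjugate (R *\<^sub>v conjugate v)"
proof (rule eq_vecI)
  fix k assume "k < dim_vec (conjugate (R *\<^sub>v conjugate v))"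
  then have k: "k < r" using R by auto
  have "row (map_mat conjugate R) k = conjugate (row R k)" using R k by (auto intro!: eq_vecI)
  moreover have "conjugate (row R k \<bullet> conjugate v) = conjugate (row R k) \<bullet> v"
    using R v k conjugate_sprod_vec[of "row R k" c "conjugate v"] by simp
  ultimately show "(map_mat conjugate R *\<^sub>v v) $ k = conjugate (R *\<^sub>v conjugate v) $ k"
    using R k by simp
qed (use R in auto)

text \<open>A matrix with trivial kernel has a surjective transpose: the Gram matrix
  \<open>R\<^sup>T conj R\<close> is injective because \<open>u \<bullet>c u = 0\<close> forces \<open>u = 0\<close>.\<close>

lemma transpose_mat_solvable_if_trivial_kernel:
  fixes R :: "complex mat"
  assumes R: "R \<in> carrier_mat r c" and K: "\<forall>v\<in>carrier_vec c. R *\<^sub>v v = 0\<^sub>v r \<longrightarrow> v = 0\<^sub>v c"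
    and b: "b \<in> carrier_vec c"
  shows "\<exists>w\<in>carrier_vec r. transpose_mat R *\<^sub>v w = b"
proof -
  define Rc where "Rc = map_mat conjugate R"
  have Rc: "Rc \<in> carrier_mat r c" and Rt: "transpose_mat R \<in> carrier_mat c r"
    unfolding Rc_def using R by auto
  have "v = 0\<^sub>v c" if v: "v \<in> carrier_vec c" and z: "(transpose_mat R * Rc) *\<^sub>v v = 0\<^sub>v c" for v
  proof -
    define u where "u = R *\<^sub>v conjugate v"
    have u: "u \<in> carrier_vec r" and cv: "conjugate v \<in> carrier_vec c"
      unfolding u_def using R v by auto
    have "transpose_mat R *\<^sub>v conjugate u = 0\<^sub>v c"
      using z assoc_mult_mat_vec[OF Rt Rc v] map_conjugate_mult_mat_vec[OF R v]
      unfolding Rc_def u_def by simp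
    then have "0 = (transpose_mat R *\<^sub>v conjugate u) \<bullet> conjugate v" using cv by simp
    also have "\<dots> = conjugate u \<bullet> u"
      unfolding u_def by (rule transpose_vec_mult_scalar[OF R cv]) (simp add: u_def[symmetric] u)
    also have "\<dots> = u \<bullet>c u" using u by (simp add: comm_scalar_prod[of _ r])
    finally have "u = 0\<^sub>v r" using u by simp
    then have "conjugate v = 0\<^sub>v c" using K cv unfolding u_def by simp
    then show "v = 0\<^sub>v c" by simp
  qed
  moreover have "transpose_mat R * Rc \<in> carrier_mat c c" using Rt Rc by auto
  ultimately obtain x where x: "x \<in> carrier_vec c" "(transpose_mat R * Rc) *\<^sub>v x = b"
    using square_mat_solvable_if_trivial_kernel[OF _ _ b] by blast
  then show ?thesis
    using assoc_mult_mat_vec[OF Rt Rc x(1)] Rc by (intro bexI[of _ "Rc *\<^sub>v x"]) auto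
qed

definition outer_prod :: "'a :: times vec \<Rightarrow> 'a vec \<Rightarrow> 'a mat" where
  "outer_prod x w = mat (dim_vec x) (dim_vec w) (\<lambda>(i, j). x $ i * w $ j)"

lemma outer_prod_carrier [simp]:
  "x \<in> carrier_vec a \<Longrightarrow> w \<in> carrier_vec b \<Longrightarrow> outer_prod x w \<in> carrier_mat a b"
  unfolding outer_prod_def by auto

lemma outer_prod_index [simp]:
  "i < dim_vec x \<Longrightarrow> j < dim_vec w \<Longrightarrow> outer_prod x w $$ (i, j) = x $ i * w $ j"
  "dim_row (outer_prod x w) = dim_vec x" "dim_col (outer_prod x w) = dim_vec w"
  unfolding outer_prod_def by auto

lemma mult_mat_outer_prod:
  fixes M :: "'a :: comm_ring_1 mat"
  assumes M: "M \<in> carrier_mat k a" and x: "x \<in> carrier_vec a" and w: "w \<in> carrier_vec b"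
  shows "M * outer_prod x w = outer_prod (M *\<^sub>v x) w"
proof (rule eq_matI)
  fix i j assume "i < dim_row (outer_prod (M *\<^sub>v x) w)" "j < dim_col (outer_prod (M *\<^sub>v x) w)"
  with M w have i: "i < k" and j: "j < b" by auto
  have "(M * outer_prod x w) $$ (i, j) = (\<Sum>l = 0..<a. M $$ (i, l) * x $ l) * w $ j"
    using M x w i j by (auto simp: scalar_prod_def sum_distrib_right mult.assoc intro!: sum.cong)
  then show "(M * outer_prod x w) $$ (i, j) = outer_prod (M *\<^sub>v x) w $$ (i, j)"
    using M x w i j by (simp add: scalar_prod_def)
qed (use M w in auto)

lemma outer_prod_mult_mat:
  fixes x :: "'a :: comm_ring_1 vec"
  assumes x: "x \<in> carrier_vec a" and w: "w \<in> carrier_vec b" and F: "F \<in> carrier_mat b b"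
  shows "outer_prod x w * F = outer_prod x (transpose_mat F *\<^sub>v w)"
proof (rule eq_matI)
  fix i j assume "i < dim_row (outer_prod x (transpose_mat F *\<^sub>v w))"
    "j < dim_col (outer_prod x (transpose_mat F *\<^sub>v w))"
  with x F have i: "i < a" and j: "j < b" by auto
  have "(outer_prod x w * F) $$ (i, j) = x $ i * (\<Sum>l = 0..<b. F $$ (l, j) * w $ l)"
    using F x w i j by (auto simp: scalar_prod_def sum_distrib_left mult_ac intro!: sum.cong)
  then show "(outer_prod x w * F) $$ (i, j) = outer_prod x (transpose_mat F *\<^sub>v w) $$ (i, j)"
    using F x w i j by (simp add: scalar_prod_def)
qed (use x F in auto)

lemma outer_prod_mult_mat_vec:
  fixes x :: "'a :: comm_ring_1 vec"
  assumes x: "x \<in> carrier_vec a" and w: "w \<in> carrier_vec b" and v: "v \<in> carrier_vec b"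
  shows "outer_prod x w *\<^sub>v v = (w \<bullet> v) \<cdot>\<^sub>v x"
  using x w v
  by (intro eq_vecI) (auto simp: scalar_prod_def sum_distrib_left mult_ac intro!: sum.cong)

lemma outer_prod_nonzero:
  fixes x :: "'a :: idom vec"
  assumes "x \<in> carrier_vec a" "w \<in> carrier_vec b" "x \<noteq> 0\<^sub>v a" "w \<noteq> 0\<^sub>v b"
  shows "outer_prod x w \<noteq> 0\<^sub>m a b"
proof
  obtain i where i: "i < a" "x $ i \<noteq> 0" using assms(1,3) by (auto simp: vec_eq_iff)
  obtain j where j: "j < b" "w $ j \<noteq> 0" using assms(2,4) by (auto simp: vec_eq_iff)
  assume "outer_prod x w = 0\<^sub>m a b"
  then have "outer_prod x w $$ (i, j) = 0" using i j by simp
  then show False using i j assms(1,2) by simp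
qed

section \<open>Coupled Sylvester equations\<close>

lemma ex_list_stepwise:
  assumes "\<And>j zs. j < N \<Longrightarrow> length zs = j \<Longrightarrow> \<exists>z. P j zs z"
  shows "\<exists>zs. length zs = N \<and> (\<forall>j<N. P j (take j zs) (zs ! j))"
  using assms
proof (induction N)
  case 0
  then show ?case by auto
next
  case (Suc N)
  then obtain zs where zs: "length zs = N" "\<forall>j<N. P j (take j zs) (zs ! j)" by auto
  from Suc.prems[of N zs] zs obtain z where "P N zs z" by auto
  with zs have "\<forall>j<Suc N. P j (take j (zs @ [z])) ((zs @ [z]) ! j)"
    by (auto simp: nth_append less_Suc_eq)
  then show ?case using zs by (intro exI[of _ "zs @ [z]"]) auto
qed

lemma mult_upper_triangular_index:
  fixes X J :: "'a :: comm_ring_1 mat"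
  assumes X: "X \<in> carrier_mat n \<nu>" and J: "J \<in> carrier_mat \<nu> \<nu>" "upper_triangular J"
    and j: "j < \<nu>" and r: "r < n"
  shows "(X * J) $$ (r, j) = (\<Sum>i<j. X $$ (r, i) * J $$ (i, j)) + X $$ (r, j) * J $$ (j, j)"
proof -
  have "(X * J) $$ (r, j) = (\<Sum>i\<in>{0..<\<nu>}. X $$ (r, i) * J $$ (i, j))"
    using X J j r by (simp add: scalar_prod_def)
  also have "\<dots> = (\<Sum>i\<in>{0..<Suc j}. X $$ (r, i) * J $$ (i, j))"
    using J j by (intro sum.mono_neutral_right) (auto simp: upper_triangularD)
  also have "\<dots> = (\<Sum>i<j. X $$ (r, i) * J $$ (i, j)) + X $$ (r, j) * J $$ (j, j)"
    by (simp add: atLeast0LessThan)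
  finally show ?thesis .
qed

lemma coupled_sylvester_triangular_trivial:
  fixes J L1 L2 L3 L4 X Y :: "'a :: comm_ring_1 mat"
  assumes J: "J \<in> carrier_mat \<nu> \<nu>" "upper_triangular J"
    and L: "L1 \<in> carrier_mat n n" "L2 \<in> carrier_mat n p" "L3 \<in> carrier_mat m n" "L4 \<in> carrier_mat m p"
    and kernel: "\<And>j x y. j < \<nu> \<Longrightarrow> x \<in> carrier_vec n \<Longrightarrow> y \<in> carrier_vec p \<Longrightarrow>
      L1 *\<^sub>v x + L2 *\<^sub>v y = J $$ (j, j) \<cdot>\<^sub>v x \<Longrightarrow> L3 *\<^sub>v x + L4 *\<^sub>v y = 0\<^sub>v m \<Longrightarrow> x = 0\<^sub>v n \<and> y = 0\<^sub>v p"
    and X: "X \<in> carrier_mat n \<nu>" and Y: "Y \<in> carrier_mat p \<nu>"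
    and eq1: "L1 * X + L2 * Y = X * J" and eq2: "L3 * X + L4 * Y = 0\<^sub>m m \<nu>"
  shows "X = 0\<^sub>m n \<nu> \<and> Y = 0\<^sub>m p \<nu>"
proof -
  have cols_zero: "col X j = 0\<^sub>v n \<and> col Y j = 0\<^sub>v p" if "j < \<nu>" for j
    using that
  proof (induction j rule: less_induct)
    case (less j)
    have X_before: "X $$ (r, i) = 0" if "i < j" "r < n" for i r
      using less.IH[of i] less.prems that X by (metis carrier_matD col_def index_vec index_zero_vec(1) order.strict_trans)
    have "L1 *\<^sub>v col X j + L2 *\<^sub>v col Y j = J $$ (j, j) \<cdot>\<^sub>v col X j"
    proof (rule eq_vecI)
      fix r assume "r < dim_vec (J $$ (j, j) \<cdot>\<^sub>v col X j)"
      then have r: "r < n" using X by auto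
      have "(L1 *\<^sub>v col X j + L2 *\<^sub>v col Y j) $ r = (X * J) $$ (r, j)"
        using L X Y r less.prems eq1[symmetric] by auto
      then show "(L1 *\<^sub>v col X j + L2 *\<^sub>v col Y j) $ r = (J $$ (j, j) \<cdot>\<^sub>v col X j) $ r"
        using mult_upper_triangular_index[OF X J less.prems r] X_before r less.prems X by simp
    qed (use L X Y in auto)
    moreover have "L3 *\<^sub>v col X j + L4 *\<^sub>v col Y j = 0\<^sub>v m"
    proof (rule eq_vecI)
      fix r assume "r < dim_vec (0\<^sub>v m :: 'a vec)"
      then have "(L3 *\<^sub>v col X j + L4 *\<^sub>v col Y j) $ r = (L3 * X + L4 * Y) $$ (r, j)"
        using L X Y less.prems by auto
      then show "(L3 *\<^sub>v col X j + L4 *\<^sub>v col Y j) $ r = 0\<^sub>v m $ r"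
        using eq2 less.prems \<open>r < dim_vec (0\<^sub>v m)\<close> by simp
    qed (use L in auto)
    moreover have "col X j \<in> carrier_vec n" "col Y j \<in> carrier_vec p" using X Y by auto
    ultimately show ?case using kernel[OF less.prems] by blast
  qed
  have "X $$ (r, j) = 0" if "r < n" "j < \<nu>" for r j
    using cols_zero[of j] that X by (metis carrier_matD col_def index_vec index_zero_vec(1))
  moreover have "Y $$ (r, j) = 0" if "r < p" "j < \<nu>" for r j
    using cols_zero[of j] that Y by (metis carrier_matD col_def index_vec index_zero_vec(1))
  ultimately show ?thesis using X Y by (auto intro!: eq_matI)
qed

text \<open>Column \<open>j\<close> of the triangular system only involves the columns \<open>i \<le> j\<close>, so the
  columns can be solved for one after another.\<close>

lemma coupled_sylvester_triangular_solvable: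
  fixes J L1 L2 L3 L4 T1 T2 :: "'a :: comm_ring_1 mat"
  assumes J: "J \<in> carrier_mat \<nu> \<nu>" "upper_triangular J"
    and L: "L1 \<in> carrier_mat n n" "L2 \<in> carrier_mat n p" "L3 \<in> carrier_mat m n" "L4 \<in> carrier_mat m p"
    and solvable: "\<And>j b1 b2. j < \<nu> \<Longrightarrow> b1 \<in> carrier_vec n \<Longrightarrow> b2 \<in> carrier_vec m \<Longrightarrow>
      \<exists>x\<in>carrier_vec n. \<exists>y\<in>carrier_vec p.
        L1 *\<^sub>v x + L2 *\<^sub>v y = J $$ (j, j) \<cdot>\<^sub>v x + b1 \<and> L3 *\<^sub>v x + L4 *\<^sub>v y = b2"
    and T: "T1 \<in> carrier_mat n \<nu>" "T2 \<in> carrier_mat m \<nu>"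
  shows "\<exists>X\<in>carrier_mat n \<nu>. \<exists>Y\<in>carrier_mat p \<nu>. L1 * X + L2 * Y = X * J + T1 \<and> L3 * X + L4 * Y = T2"
proof -
  define rhs where "rhs j zs = vec n (\<lambda>r. T1 $$ (r, j) + (\<Sum>i<j. fst (zs ! i) $ r * J $$ (i, j)))"
    for j and zs :: "('a vec \<times> 'a vec) list"
  define column_eq where "column_eq j zs z \<longleftrightarrow>
     fst z \<in> carrier_vec n \<and> snd z \<in> carrier_vec p \<and>
     L1 *\<^sub>v fst z + L2 *\<^sub>v snd z = J $$ (j, j) \<cdot>\<^sub>v fst z + rhs j zs \<and>
     L3 *\<^sub>v fst z + L4 *\<^sub>v snd z = col T2 j" for j zs z
  have "\<exists>z. column_eq j zs z" if j: "j < \<nu>" for j zs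
  proof -
    obtain x y where "x \<in> carrier_vec n" "y \<in> carrier_vec p"
      "L1 *\<^sub>v x + L2 *\<^sub>v y = J $$ (j, j) \<cdot>\<^sub>v x + rhs j zs" "L3 *\<^sub>v x + L4 *\<^sub>v y = col T2 j"
      using solvable[OF j, of "rhs j zs" "col T2 j"] T j unfolding rhs_def by fastforce
    then show ?thesis unfolding column_eq_def by (intro exI[of _ "(x, y)"]) auto
  qed
  then obtain zs where zs: "length zs = \<nu>" and cols: "\<And>j. j < \<nu> \<Longrightarrow> column_eq j (take j zs) (zs ! j)"
    using ex_list_stepwise[of \<nu> column_eq] by blast
  define X where "X = mat n \<nu> (\<lambda>(r, j). fst (zs ! j) $ r)"
  define Y where "Y = mat p \<nu> (\<lambda>(r, j). snd (zs ! j) $ r)"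
  have X: "X \<in> carrier_mat n \<nu>" and Y: "Y \<in> carrier_mat p \<nu>" unfolding X_def Y_def by auto
  have col_X: "col X j = fst (zs ! j)" and col_Y: "col Y j = snd (zs ! j)"
    and col_carrier: "fst (zs ! j) \<in> carrier_vec n" "snd (zs ! j) \<in> carrier_vec p" if "j < \<nu>" for j
    using cols[OF that] that unfolding column_eq_def X_def Y_def by (auto intro!: eq_vecI)
  have "L1 * X + L2 * Y = X * J + T1"
  proof (rule eq_matI)
    fix r j assume "r < dim_row (X * J + T1)" "j < dim_col (X * J + T1)"
    then have r: "r < n" and j: "j < \<nu>" using X J T by auto
    have "(L1 * X + L2 * Y) $$ (r, j) = (L1 *\<^sub>v fst (zs ! j) + L2 *\<^sub>v snd (zs ! j)) $ r"
      using L X Y r j col_X[OF j] col_Y[OF j] col_carrier[OF j] by auto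
    also have "\<dots> = J $$ (j, j) * X $$ (r, j) + T1 $$ (r, j) + (\<Sum>i<j. X $$ (r, i) * J $$ (i, j))"
      using cols[OF j] r j col_carrier[OF j] unfolding column_eq_def rhs_def X_def by auto
    also have "\<dots> = (X * J + T1) $$ (r, j)"
      using mult_upper_triangular_index[OF X J j r] X T r j by (simp add: algebra_simps)
    finally show "(L1 * X + L2 * Y) $$ (r, j) = (X * J + T1) $$ (r, j)" .
  qed (use L X Y J T in auto)
  moreover have "L3 * X + L4 * Y = T2"
  proof (rule eq_matI)
    fix r j assume "r < dim_row T2" "j < dim_col T2"
    then have r: "r < m" and j: "j < \<nu>" using T by auto
    have "(L3 * X + L4 * Y) $$ (r, j) = (L3 *\<^sub>v fst (zs ! j) + L4 *\<^sub>v snd (zs ! j)) $ r"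
      using L X Y r j col_X[OF j] col_Y[OF j] col_carrier[OF j] by auto
    then show "(L3 * X + L4 * Y) $$ (r, j) = T2 $$ (r, j)"
      using cols[OF j] r j T unfolding column_eq_def by auto
  qed (use L X Y T in auto)
  ultimately show ?thesis using X Y by blast
qed

lemma mult_assoc_add_mat:
  fixes L1 L2 X Y P :: "'a :: comm_ring mat"
  assumes "L1 \<in> carrier_mat n k" "L2 \<in> carrier_mat n l" "X \<in> carrier_mat k \<nu>" "Y \<in> carrier_mat l \<nu>"
    and "P \<in> carrier_mat \<nu> \<mu>"
  shows "L1 * (X * P) + L2 * (Y * P) = (L1 * X + L2 * Y) * P"
  using assms add_mult_distrib_mat[of "L1 * X" n \<nu> "L2 * Y" P \<mu>]
    assoc_mult_mat[of L1 n k X \<nu> P \<mu>] assoc_mult_mat[of L2 n l Y \<nu> P \<mu>] by simp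

lemma schur_triangularization:
  fixes F :: "complex mat" assumes F: "F \<in> carrier_mat \<nu> \<nu>"
  obtains P J Q where "P \<in> carrier_mat \<nu> \<nu>" "J \<in> carrier_mat \<nu> \<nu>" "Q \<in> carrier_mat \<nu> \<nu>"
    "P * Q = 1\<^sub>m \<nu>" "F * P = P * J" "Q * F = J * Q" "upper_triangular J"
    "\<And>j. j < \<nu> \<Longrightarrow> J $$ (j, j) \<in> eig F"
proof -
  obtain es where es: "char_poly F = (\<Prod>a\<leftarrow>es. [:- a, 1:])" using char_poly_factorized[OF F] by auto
  obtain J P Q where sd: "schur_decomposition F es = (J, P, Q)" by (cases "schur_decomposition F es") auto
  from schur_decomposition[OF F es sd]
  have sim: "similar_mat_wit F J P Q" and ut: "upper_triangular J" and dg: "diag_mat J = es" by auto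
  from sim F have c: "P \<in> carrier_mat \<nu> \<nu>" "J \<in> carrier_mat \<nu> \<nu>" "Q \<in> carrier_mat \<nu> \<nu>"
    "P * Q = 1\<^sub>m \<nu>" "Q * P = 1\<^sub>m \<nu>" and FPJQ: "F = P * J * Q"
    unfolding similar_mat_wit_def Let_def by auto
  have PJ: "P * J \<in> carrier_mat \<nu> \<nu>" using c by simp
  have "F * P = P * J * Q * P" using FPJQ by simp
  also have "\<dots> = P * J * (Q * P)" by (rule assoc_mult_mat[OF PJ c(3,1)])
  also have "\<dots> = P * J" using c PJ by simp
  finally have FP: "F * P = P * J" .
  have "Q * F = Q * (P * J * Q)" using FPJQ by simp
  also have "\<dots> = Q * (P * J) * Q" by (rule assoc_mult_mat[OF c(3) PJ c(3), symmetric])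
  also have "Q * (P * J) = Q * P * J" by (rule assoc_mult_mat[OF c(3,1,2), symmetric])
  also have "\<dots> = J" using c by simp
  finally have QF: "Q * F = J * Q" .
  have "J $$ (j, j) \<in> eig F" if j: "j < \<nu>" for j
  proof -
    have "J $$ (j, j) \<in> set es" using dg j c(2) unfolding diag_mat_def by auto
    then have "poly (char_poly F) (J $$ (j, j)) = 0" unfolding es by (rule linear_poly_root)
    then show ?thesis unfolding eig_def using eigenvalue_root_char_poly[OF F] by auto
  qed
  with c FP QF ut that show ?thesis by blast
qed

lemma coupled_sylvester_trivial:
  fixes F L1 L2 L3 L4 X Y :: "complex mat"
  assumes F: "F \<in> carrier_mat \<nu> \<nu>"
    and L: "L1 \<in> carrier_mat n n" "L2 \<in> carrier_mat n p" "L3 \<in> carrier_mat m n" "L4 \<in> carrier_mat m p"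
    and kernel: "\<And>lam x y. lam \<in> eig F \<Longrightarrow> x \<in> carrier_vec n \<Longrightarrow> y \<in> carrier_vec p \<Longrightarrow>
      L1 *\<^sub>v x + L2 *\<^sub>v y = lam \<cdot>\<^sub>v x \<Longrightarrow> L3 *\<^sub>v x + L4 *\<^sub>v y = 0\<^sub>v m \<Longrightarrow> x = 0\<^sub>v n \<and> y = 0\<^sub>v p"
    and X: "X \<in> carrier_mat n \<nu>" and Y: "Y \<in> carrier_mat p \<nu>"
    and eq1: "L1 * X + L2 * Y = X * F" and eq2: "L3 * X + L4 * Y = 0\<^sub>m m \<nu>"
  shows "X = 0\<^sub>m n \<nu> \<and> Y = 0\<^sub>m p \<nu>"
proof -
  obtain P J Q where PJQ: "P \<in> carrier_mat \<nu> \<nu>" "J \<in> carrier_mat \<nu> \<nu>" "Q \<in> carrier_mat \<nu> \<nu>"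
    "P * Q = 1\<^sub>m \<nu>" "F * P = P * J" "upper_triangular J" "\<And>j. j < \<nu> \<Longrightarrow> J $$ (j, j) \<in> eig F"
    using schur_triangularization[OF F] by metis
  have XP: "X * P \<in> carrier_mat n \<nu>" and YP: "Y * P \<in> carrier_mat p \<nu>" using X Y PJQ by auto
  have "L1 * (X * P) + L2 * (Y * P) = (L1 * X + L2 * Y) * P"
    using L X Y PJQ by (simp add: mult_assoc_add_mat)
  also have "\<dots> = X * P * J" using eq1 X F PJQ by (simp add: assoc_mult_mat[of _ n \<nu>])
  finally have "L1 * (X * P) + L2 * (Y * P) = X * P * J" .
  moreover have "L3 * (X * P) + L4 * (Y * P) = 0\<^sub>m m \<nu>"
    using L X Y PJQ eq2 by (simp add: mult_assoc_add_mat)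
  ultimately have "X * P = 0\<^sub>m n \<nu> \<and> Y * P = 0\<^sub>m p \<nu>"
    using coupled_sylvester_triangular_trivial[OF PJQ(2,6) L _ XP YP] kernel[OF PJQ(7)] by blast
  moreover have "X = X * P * Q" and "Y = Y * P * Q" using X Y PJQ by (simp_all add: assoc_mult_mat)
  ultimately show ?thesis using PJQ by auto
qed

lemma subtract_mat_equations:
  fixes A1 A2 B1 B2 C1 C2 T :: "'a :: ab_group_add mat"
  assumes "A1 \<in> carrier_mat r k" "A2 \<in> carrier_mat r k" "B1 \<in> carrier_mat r k" "B2 \<in> carrier_mat r k"
    "T \<in> carrier_mat r k" and "C1 = A1 + B1 + T" "C2 = A2 + B2 + T"
  shows "C1 - C2 = (A1 - A2) + (B1 - B2)"
  using assms by (auto simp: mat_eq_iff algebra_simps)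

lemma coupled_sylvester_unique:
  fixes F L1 L2 L3 L4 X1 Y1 X2 Y2 T1 T2 :: "complex mat"
  assumes F: "F \<in> carrier_mat \<nu> \<nu>"
    and L: "L1 \<in> carrier_mat n n" "L2 \<in> carrier_mat n p" "L3 \<in> carrier_mat m n" "L4 \<in> carrier_mat m p"
    and kernel: "\<And>lam x y. lam \<in> eig F \<Longrightarrow> x \<in> carrier_vec n \<Longrightarrow> y \<in> carrier_vec p \<Longrightarrow>
      L1 *\<^sub>v x + L2 *\<^sub>v y = lam \<cdot>\<^sub>v x \<Longrightarrow> L3 *\<^sub>v x + L4 *\<^sub>v y = 0\<^sub>v m \<Longrightarrow> x = 0\<^sub>v n \<and> y = 0\<^sub>v p"
    and XY: "X1 \<in> carrier_mat n \<nu>" "Y1 \<in> carrier_mat p \<nu>" "X2 \<in> carrier_mat n \<nu>" "Y2 \<in> carrier_mat p \<nu>"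
    and T: "T1 \<in> carrier_mat n \<nu>" "T2 \<in> carrier_mat m \<nu>"
    and eq1: "X1 * F = L1 * X1 + L2 * Y1 + T1" "X2 * F = L1 * X2 + L2 * Y2 + T1"
    and eq2: "0\<^sub>m m \<nu> = L3 * X1 + L4 * Y1 + T2" "0\<^sub>m m \<nu> = L3 * X2 + L4 * Y2 + T2"
  shows "X1 = X2 \<and> Y1 = Y2"
proof -
  have "X1 * F - X2 * F = (L1 * X1 - L1 * X2) + (L2 * Y1 - L2 * Y2)"
    using L XY T by (intro subtract_mat_equations[OF _ _ _ _ _ eq1]) auto
  then have "L1 * (X1 - X2) + L2 * (Y1 - Y2) = (X1 - X2) * F"
    using L XY F by (simp add: mult_minus_distrib_mat[of _ n n] mult_minus_distrib_mat[of _ n p]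
      minus_mult_distrib_mat[of _ n \<nu>])
  moreover have "0\<^sub>m m \<nu> - 0\<^sub>m m \<nu> = (L3 * X1 - L3 * X2) + (L4 * Y1 - L4 * Y2)"
    using L XY T by (intro subtract_mat_equations[OF _ _ _ _ _ eq2]) auto
  then have "L3 * (X1 - X2) + L4 * (Y1 - Y2) = 0\<^sub>m m \<nu>"
    using L XY by (simp add: mult_minus_distrib_mat[of _ m n] mult_minus_distrib_mat[of _ m p]
      minus_r_inv_mat[OF zero_carrier_mat])
  ultimately have "X1 - X2 = 0\<^sub>m n \<nu> \<and> Y1 - Y2 = 0\<^sub>m p \<nu>"
    using XY by (intro coupled_sylvester_trivial[OF F L kernel]) auto
  then show ?thesis using XY by (auto simp: mat_eq_iff)
qed

lemma coupled_sylvester_solvable: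
  fixes F L1 L2 L3 L4 T1 T2 :: "complex mat"
  assumes F: "F \<in> carrier_mat \<nu> \<nu>"
    and L: "L1 \<in> carrier_mat n n" "L2 \<in> carrier_mat n p" "L3 \<in> carrier_mat m n" "L4 \<in> carrier_mat m p"
    and solvable: "\<And>lam b1 b2. lam \<in> eig F \<Longrightarrow> b1 \<in> carrier_vec n \<Longrightarrow> b2 \<in> carrier_vec m \<Longrightarrow>
      \<exists>x\<in>carrier_vec n. \<exists>y\<in>carrier_vec p.
        L1 *\<^sub>v x + L2 *\<^sub>v y = lam \<cdot>\<^sub>v x + b1 \<and> L3 *\<^sub>v x + L4 *\<^sub>v y = b2"
    and T: "T1 \<in> carrier_mat n \<nu>" "T2 \<in> carrier_mat m \<nu>"
  shows "\<exists>X\<in>carrier_mat n \<nu>. \<exists>Y\<in>carrier_mat p \<nu>. L1 * X + L2 * Y = X * F + T1 \<and> L3 * X + L4 * Y = T2"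
proof -
  obtain P J Q where PJQ: "P \<in> carrier_mat \<nu> \<nu>" "J \<in> carrier_mat \<nu> \<nu>" "Q \<in> carrier_mat \<nu> \<nu>"
    "P * Q = 1\<^sub>m \<nu>" "Q * F = J * Q" "upper_triangular J" "\<And>j. j < \<nu> \<Longrightarrow> J $$ (j, j) \<in> eig F"
    using schur_triangularization[OF F] by metis
  have TP: "T1 * P \<in> carrier_mat n \<nu>" "T2 * P \<in> carrier_mat m \<nu>" using T PJQ by auto
  obtain X Y where X: "X \<in> carrier_mat n \<nu>" and Y: "Y \<in> carrier_mat p \<nu>"
    and eq1: "L1 * X + L2 * Y = X * J + T1 * P" and eq2: "L3 * X + L4 * Y = T2 * P"
    using coupled_sylvester_triangular_solvable[OF PJQ(2,6) L _ TP] solvable[OF PJQ(7)] by metis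
  have "L1 * (X * Q) + L2 * (Y * Q) = (X * J + T1 * P) * Q"
    unfolding eq1[symmetric] using L X Y PJQ by (intro mult_assoc_add_mat)
  also have "\<dots> = X * J * Q + T1 * P * Q" using X T PJQ by (intro add_mult_distrib_mat) auto
  also have "X * J * Q = X * Q * F"
    using assoc_mult_mat[OF X PJQ(2,3)] assoc_mult_mat[OF X PJQ(3) F] PJQ(5) by simp
  also have "T1 * P * Q = T1" using assoc_mult_mat[OF T(1) PJQ(1,3)] PJQ(4) T by simp
  finally have "L1 * (X * Q) + L2 * (Y * Q) = X * Q * F + T1" .
  moreover have "L3 * (X * Q) + L4 * (Y * Q) = T2"
    unfolding mult_assoc_add_mat[OF L(3,4) X Y PJQ(3)] eq2
    using assoc_mult_mat[OF T(2) PJQ(1,3)] PJQ(4) T by simp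
  moreover have "X * Q \<in> carrier_mat n \<nu>" "Y * Q \<in> carrier_mat p \<nu>" using X Y PJQ by auto
  ultimately show ?thesis by blast
qed
lemma sylvester_unique_solvable:
  fixes A F X :: "complex mat"
  assumes A: "A \<in> carrier_mat n n" and F: "F \<in> carrier_mat \<nu> \<nu>" and disj: "eig A \<inter> eig F = {}"
    and X: "X \<in> carrier_mat n \<nu>"
  shows "\<exists>!Pi. Pi \<in> carrier_mat n \<nu> \<and> Pi * F - A * Pi = X"
proof -
  text \<open>The Sylvester equation is the coupled system with empty second block row and column.\<close>
  let ?O1 = "0\<^sub>m n 0 :: complex mat" and ?O2 = "0\<^sub>m 0 n :: complex mat" and ?O3 = "0\<^sub>m 0 0 :: complex mat"
  have O: "?O1 \<in> carrier_mat n 0" "?O2 \<in> carrier_mat 0 n" "?O3 \<in> carrier_mat 0 0" by auto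
  have no_eigvec: "v = 0\<^sub>v n" if "lam \<in> eig F" "v \<in> carrier_vec n" "A *\<^sub>v v = lam \<cdot>\<^sub>v v" for lam v
    using that disj mem_eig_iff[OF A, of lam] by blast
  have "\<exists>Pi\<in>carrier_mat n \<nu>. \<exists>Y\<in>carrier_mat 0 \<nu>. A * Pi + ?O1 * Y = Pi * F + (- X) \<and>
       ?O2 * Pi + ?O3 * Y = 0\<^sub>m 0 \<nu>"
  proof (rule coupled_sylvester_solvable[OF F A O])
    fix lam and b1 b2 :: "complex vec"
    assume lam: "lam \<in> eig F" and b1: "b1 \<in> carrier_vec n" and b2: "b2 \<in> carrier_vec 0"
    have "\<forall>v\<in>carrier_vec n. (A - lam \<cdot>\<^sub>m 1\<^sub>m n) *\<^sub>v v = 0\<^sub>v n \<longrightarrow> v = 0\<^sub>v n"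
      using no_eigvec[OF lam] A by (simp add: mult_minus_smult_one_eq_iff)
    moreover have "A - lam \<cdot>\<^sub>m 1\<^sub>m n \<in> carrier_mat n n" using A by auto
    ultimately obtain x where x: "x \<in> carrier_vec n" "(A - lam \<cdot>\<^sub>m 1\<^sub>m n) *\<^sub>v x = b1"
      using square_mat_solvable_if_trivial_kernel[OF _ _ b1] by blast
    then have "A *\<^sub>v x = lam \<cdot>\<^sub>v x + b1"
      using A b1 by (simp add: mult_minus_smult_one_eq_iff)
    moreover have "0\<^sub>m n 0 *\<^sub>v 0\<^sub>v 0 = 0\<^sub>v n" by (intro eq_vecI) (auto simp: scalar_prod_def)
    moreover have "0\<^sub>m 0 n *\<^sub>v x + 0\<^sub>m 0 0 *\<^sub>v 0\<^sub>v 0 = b2" using b2 by (intro eq_vecI) auto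
    ultimately show "\<exists>x\<in>carrier_vec n. \<exists>y\<in>carrier_vec 0. A *\<^sub>v x + ?O1 *\<^sub>v y = lam \<cdot>\<^sub>v x + b1 \<and>
        ?O2 *\<^sub>v x + ?O3 *\<^sub>v y = b2"
      using x A by (intro bexI[of _ x] bexI[of _ "0\<^sub>v 0"]) auto
  qed (use X in auto)
  then obtain Pi Y where "Pi \<in> carrier_mat n \<nu>" "Y \<in> carrier_mat 0 \<nu>" "A * Pi + ?O1 * Y = Pi * F + (- X)"
    by blast
  then have "Pi \<in> carrier_mat n \<nu> \<and> Pi * F - A * Pi = X"
    using A F X by (auto simp: mat_eq_iff algebra_simps simp del: index_mult_mat(1))
  moreover have "P1 = P2"
    if P1: "P1 \<in> carrier_mat n \<nu>" "P1 * F - A * P1 = X" and P2: "P2 \<in> carrier_mat n \<nu>" "P2 * F - A * P2 = X"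
    for P1 P2
  proof -
    have eq1: "Pk * F = A * Pk + ?O1 * 0\<^sub>m 0 \<nu> + X"
      if "Pk \<in> carrier_mat n \<nu>" "Pk * F - A * Pk = X" for Pk
      using that A F X by (auto simp: mat_eq_iff algebra_simps simp del: index_mult_mat(1))
    have eq2: "0\<^sub>m 0 \<nu> = ?O2 * Pk + ?O3 * 0\<^sub>m 0 \<nu> + 0\<^sub>m 0 \<nu>" if "Pk \<in> carrier_mat n \<nu>" for Pk
      using that by (intro eq_matI) auto
    have kernel: "x = 0\<^sub>v n \<and> y = 0\<^sub>v 0"
      if "lam \<in> eig F" "x \<in> carrier_vec n" "y \<in> carrier_vec 0" "A *\<^sub>v x + ?O1 *\<^sub>v y = lam \<cdot>\<^sub>v x"
      for lam and x y :: "complex vec"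
    proof -
      have "0\<^sub>m n 0 *\<^sub>v y = 0\<^sub>v n" using that(3) by (intro eq_vecI) (auto simp: scalar_prod_def)
      then show ?thesis using that no_eigvec[OF that(1,2)] A by auto
    qed
    from coupled_sylvester_unique[OF F A O kernel P1(1) zero_carrier_mat P2(1) zero_carrier_mat
        X zero_carrier_mat eq1[OF P1] eq1[OF P2] eq2[OF P1(1)] eq2[OF P2(1)]]
    show ?thesis by simp
  qed
  ultimately show ?thesis by blast
qed

lemma sylvester_left_unique_solvable:
  fixes A F Y :: "complex mat"
  assumes A: "A \<in> carrier_mat n n" and F: "F \<in> carrier_mat \<nu> \<nu>" and disj: "eig A \<inter> eig F = {}"
    and Y: "Y \<in> carrier_mat \<nu> n"
  shows "\<exists>!M. M \<in> carrier_mat \<nu> n \<and> M * A - F * M = Y"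
proof -
  have transpose_iff: "M * A - F * M = Y \<longleftrightarrow>
      transpose_mat M * transpose_mat F - transpose_mat A * transpose_mat M = - transpose_mat Y"
    if M: "M \<in> carrier_mat \<nu> n" for M
  proof -
    have "M * A - F * M = Y \<longleftrightarrow> transpose_mat (M * A - F * M) = transpose_mat Y"
      by (metis transpose_transpose)
    also have "transpose_mat (M * A - F * M) = transpose_mat A * transpose_mat M - transpose_mat M * transpose_mat F"
      using M A F by (simp add: transpose_minus[of _ \<nu> n] transpose_mult[of _ \<nu> n] transpose_mult[of _ \<nu> \<nu>])
    finally show ?thesis
      using M A F Y by (auto simp: mat_eq_iff algebra_simps simp del: index_mult_mat(1))
  qed
  have "eig (transpose_mat A) \<inter> eig (transpose_mat F) = {}"
    using disj eig_transpose_mat[OF A] eig_transpose_mat[OF F] by simp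
  then have "\<exists>!Pi. Pi \<in> carrier_mat n \<nu> \<and> Pi * transpose_mat F - transpose_mat A * Pi = - transpose_mat Y"
    using A F Y by (intro sylvester_unique_solvable) auto
  then obtain Pi where Pi: "Pi \<in> carrier_mat n \<nu>" "Pi * transpose_mat F - transpose_mat A * Pi = - transpose_mat Y"
    and unique: "\<And>Pi'. Pi' \<in> carrier_mat n \<nu> \<and>
      Pi' * transpose_mat F - transpose_mat A * Pi' = - transpose_mat Y \<Longrightarrow> Pi' = Pi"
    by (elim ex1E) blast
  show ?thesis
  proof (rule ex1I[of _ "transpose_mat Pi"])
    show "transpose_mat Pi \<in> carrier_mat \<nu> n \<and> transpose_mat Pi * A - F * transpose_mat Pi = Y"
      using transpose_iff[of "transpose_mat Pi"] Pi by simp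
  next
    fix M assume "M \<in> carrier_mat \<nu> n \<and> M * A - F * M = Y"
    then have "transpose_mat M = Pi" using transpose_iff[of M] unique[of "transpose_mat M"] by simp
    then show "M = transpose_mat Pi" by auto
  qed
qed

lemma ex_left_eigenvector:
  fixes F :: "complex mat" assumes F: "F \<in> carrier_mat \<nu> \<nu>" and lam: "lam \<in> eig F"
  obtains w where "w \<in> carrier_vec \<nu>" "w \<noteq> 0\<^sub>v \<nu>" "transpose_mat F *\<^sub>v w = lam \<cdot>\<^sub>v w"
  using lam eig_transpose_mat[OF F] mem_eig_iff[of "transpose_mat F" \<nu> lam] F by auto

lemma append_zero_vec: "0\<^sub>v n @\<^sub>v 0\<^sub>v k = (0\<^sub>v (n + k) :: 'a :: zero vec)"
  by (intro eq_vecI) auto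

lemma four_block_mat_shift_mult_append_eq_iff:
  fixes L1 L2 L3 L4 :: "'a :: comm_ring_1 mat"
  assumes L: "L1 \<in> carrier_mat n n" "L2 \<in> carrier_mat n k" "L3 \<in> carrier_mat r n" "L4 \<in> carrier_mat r k"
    and x: "x \<in> carrier_vec n" and u: "u \<in> carrier_vec k"
    and b: "b1 \<in> carrier_vec n" "b2 \<in> carrier_vec r"
  shows "four_block_mat (L1 - c \<cdot>\<^sub>m 1\<^sub>m n) L2 L3 L4 *\<^sub>v (x @\<^sub>v u) = b1 @\<^sub>v b2 \<longleftrightarrow>
    L1 *\<^sub>v x + L2 *\<^sub>v u = c \<cdot>\<^sub>v x + b1 \<and> L3 *\<^sub>v x + L4 *\<^sub>v u = b2"
proof -
  have "L1 - c \<cdot>\<^sub>m 1\<^sub>m n \<in> carrier_mat n n" using L by auto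
  from four_block_mat_mult_vec[OF this L(2-4) x u]
  have "four_block_mat (L1 - c \<cdot>\<^sub>m 1\<^sub>m n) L2 L3 L4 *\<^sub>v (x @\<^sub>v u) =
      (L1 *\<^sub>v x - c \<cdot>\<^sub>v x + L2 *\<^sub>v u) @\<^sub>v (L3 *\<^sub>v x + L4 *\<^sub>v u)"
    using minus_smult_one_mult_mat_vec[OF L(1) x] by simp
  moreover have "L1 *\<^sub>v x - c \<cdot>\<^sub>v x + L2 *\<^sub>v u = b1 \<longleftrightarrow> L1 *\<^sub>v x + L2 *\<^sub>v u = c \<cdot>\<^sub>v x + b1"
    using L x u b by (auto simp: vec_eq_iff algebra_simps simp del: index_mult_mat_vec)
  moreover have "L1 *\<^sub>v x - c \<cdot>\<^sub>v x + L2 *\<^sub>v u \<in> carrier_vec n" using L x u by auto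
  ultimately show ?thesis using append_vec_eq[OF _ b(1)] by simp
qed

definition observable_on :: "complex set \<Rightarrow> complex mat \<Rightarrow> complex mat \<Rightarrow> bool" where
  "observable_on S F H \<longleftrightarrow> (\<forall>lam\<in>S. \<forall>f. eigenvector F f lam \<longrightarrow> H *\<^sub>v f \<noteq> 0\<^sub>v (dim_row H))"

lemma observable_pair_iff_observable_on: "observable_pair F H \<longleftrightarrow> observable_on UNIV F H"
  unfolding observable_pair_def observable_on_def by simp

lemma detectable_pair_iff_observable_on:
  "detectable_pair F H \<longleftrightarrow> observable_on {lam. 0 \<le> Re lam} F H"
  unfolding detectable_pair_def observable_on_def by auto

lemma left_eigenvector_orthogonal:
  fixes F :: "'a :: comm_ring_1 mat"
  assumes F: "F \<in> carrier_mat \<nu> \<nu>" and w: "w \<in> carrier_vec \<nu>" and y: "y \<in> carrier_vec \<nu>"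
    and Fw: "transpose_mat F *\<^sub>v w = lam \<cdot>\<^sub>v w"
  shows "w \<bullet> (F *\<^sub>v y - lam \<cdot>\<^sub>v y) = 0"
proof -
  have "w \<bullet> (F *\<^sub>v y) = lam * (w \<bullet> y)"
    using transpose_vec_mult_scalar[OF F y w] Fw w y by simp
  then show ?thesis using F w y by (simp add: scalar_prod_minus_distrib[of _ \<nu>])
qed

section \<open>The regulator equations of a system and an exosystem\<close>

locale exosystem_setting =
  fixes A B C D F :: "complex mat" and n m p \<nu> :: nat
  assumes A: "A \<in> carrier_mat n n" and B: "B \<in> carrier_mat n m"
    and C: "C \<in> carrier_mat p n" and D: "D \<in> carrier_mat p m"
    and F: "F \<in> carrier_mat \<nu> \<nu>"
    and disj: "eig A \<inter> eig F = {}"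
begin

definition rosenbrock_injective :: "complex \<Rightarrow> bool" where
  "rosenbrock_injective lam \<longleftrightarrow> (\<forall>x\<in>carrier_vec n. \<forall>u\<in>carrier_vec m.
     A *\<^sub>v x + B *\<^sub>v u = lam \<cdot>\<^sub>v x \<and> C *\<^sub>v x + D *\<^sub>v u = 0\<^sub>v p \<longrightarrow> x = 0\<^sub>v n \<and> u = 0\<^sub>v m)"

lemma rosenbrock_carrier: "rosenbrock A B C D lam \<in> carrier_mat (n + p) (n + m)"
  unfolding rosenbrock_def using A B C D by auto

lemma full_col_rank_rosenbrock_iff:
  "full_col_rank (rosenbrock A B C D lam) \<longleftrightarrow> rosenbrock_injective lam"
proof -
  let ?R = "rosenbrock A B C D lam"
  have R: "?R = four_block_mat (A - lam \<cdot>\<^sub>m 1\<^sub>m n) B C D"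
    unfolding rosenbrock_def using A by simp
  have "full_col_rank ?R \<longleftrightarrow> (\<forall>v\<in>carrier_vec (n + m). ?R *\<^sub>v v = 0\<^sub>v (n + p) \<longrightarrow> v = 0\<^sub>v (n + m))"
    by (rule full_col_rank_iff_trivial_kernel[OF rosenbrock_carrier])
  also have "\<dots> \<longleftrightarrow> (\<forall>x\<in>carrier_vec n. \<forall>u\<in>carrier_vec m.
      ?R *\<^sub>v (x @\<^sub>v u) = 0\<^sub>v n @\<^sub>v 0\<^sub>v p \<longrightarrow> x @\<^sub>v u = 0\<^sub>v n @\<^sub>v 0\<^sub>v m)"
    unfolding all_vec_append append_zero_vec ..
  also have "\<dots> \<longleftrightarrow> rosenbrock_injective lam"
    unfolding rosenbrock_injective_def R
    using four_block_mat_shift_mult_append_eq_iff[OF A B C D] by (simp add: append_vec_eq[of _ n])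
  finally show ?thesis .
qed

lemma transpose_rosenbrock_solvable:
  assumes inj: "rosenbrock_injective lam" and b: "b1 \<in> carrier_vec n" "b2 \<in> carrier_vec m"
  shows "\<exists>x\<in>carrier_vec n. \<exists>y\<in>carrier_vec p.
    transpose_mat A *\<^sub>v x + transpose_mat C *\<^sub>v y = lam \<cdot>\<^sub>v x + b1 \<and>
    transpose_mat B *\<^sub>v x + transpose_mat D *\<^sub>v y = b2"
proof -
  note R = rosenbrock_carrier[of lam]
  have "transpose_mat (A - lam \<cdot>\<^sub>m 1\<^sub>m n) = transpose_mat A - lam \<cdot>\<^sub>m 1\<^sub>m n"
    using A by (intro eq_matI) auto
  then have RT: "transpose_mat (rosenbrock A B C D lam) =
      four_block_mat (transpose_mat A - lam \<cdot>\<^sub>m 1\<^sub>m n) (transpose_mat C) (transpose_mat B) (transpose_mat D)"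
    unfolding rosenbrock_def using A B C D transpose_four_block_mat[of "A - lam \<cdot>\<^sub>m 1\<^sub>m n" n n B m C p D]
    by auto
  have "\<forall>v\<in>carrier_vec (n + m). rosenbrock A B C D lam *\<^sub>v v = 0\<^sub>v (n + p) \<longrightarrow> v = 0\<^sub>v (n + m)"
    using inj unfolding full_col_rank_rosenbrock_iff[symmetric] full_col_rank_iff_trivial_kernel[OF R] .
  moreover have "b1 @\<^sub>v b2 \<in> carrier_vec (n + m)" using b by simp
  ultimately obtain w where w: "w \<in> carrier_vec (n + p)"
    "transpose_mat (rosenbrock A B C D lam) *\<^sub>v w = b1 @\<^sub>v b2"
    using transpose_mat_solvable_if_trivial_kernel[OF R] by blast
  define x y where "x = vec_first w n" and "y = vec_last w p"
  have xy: "x \<in> carrier_vec n" "y \<in> carrier_vec p" "w = x @\<^sub>v y"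
    unfolding x_def y_def using vec_first_last_append[OF w(1)] by auto
  have "transpose_mat A *\<^sub>v x + transpose_mat C *\<^sub>v y = lam \<cdot>\<^sub>v x + b1 \<and>
      transpose_mat B *\<^sub>v x + transpose_mat D *\<^sub>v y = b2"
    using w(2) four_block_mat_shift_mult_append_eq_iff[of "transpose_mat A" n "transpose_mat C" p
        "transpose_mat B" m "transpose_mat D" x y b1 b2 lam] A B C D xy b
    unfolding RT by simp
  with xy show ?thesis by blast
qed

lemma eig_F_eigenvector_of_A_trivial:
  "lam \<in> eig F \<Longrightarrow> x \<in> carrier_vec n \<Longrightarrow> A *\<^sub>v x = lam \<cdot>\<^sub>v x \<Longrightarrow> x = 0\<^sub>v n"
  using disj mem_eig_iff[OF A, of lam] by blast

lemma rosenbrock_kernel_vector: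
  assumes lam: "lam \<in> eig F" and not_inj: "\<not> rosenbrock_injective lam"
  obtains x u where "x \<in> carrier_vec n" "u \<in> carrier_vec m" "u \<noteq> 0\<^sub>v m"
    "A *\<^sub>v x + B *\<^sub>v u = lam \<cdot>\<^sub>v x" "C *\<^sub>v x + D *\<^sub>v u = 0\<^sub>v p"
proof -
  from not_inj obtain x u where xu: "x \<in> carrier_vec n" "u \<in> carrier_vec m"
    "A *\<^sub>v x + B *\<^sub>v u = lam \<cdot>\<^sub>v x" "C *\<^sub>v x + D *\<^sub>v u = 0\<^sub>v p" "\<not> (x = 0\<^sub>v n \<and> u = 0\<^sub>v m)"
    unfolding rosenbrock_injective_def by blast
  moreover have "u \<noteq> 0\<^sub>v m"
  proof
    assume "u = 0\<^sub>v m"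
    with xu A B have "A *\<^sub>v x = lam \<cdot>\<^sub>v x" by simp
    with xu \<open>u = 0\<^sub>v m\<close> show False using eig_F_eigenvector_of_A_trivial[OF lam] by blast
  qed
  ultimately show ?thesis using that by blast
qed

text \<open>The witness is \<open>(x w\<^sup>T, u w\<^sup>T)\<close> for a kernel vector \<open>(x, u)\<close> of \<open>R\<^sub>\<Sigma>(\<lambda>)\<close> and a
  left eigenvector \<open>w\<close> of \<open>F\<close>.\<close>

lemma homogeneous_regulator_nontrivial_solution:
  assumes lam: "lam \<in> eig F" and not_inj: "\<not> rosenbrock_injective lam"
  obtains Pi Psi where "Pi \<in> carrier_mat n \<nu>" "Psi \<in> carrier_mat m \<nu>" "Psi \<noteq> 0\<^sub>m m \<nu>"
    "Pi * F = A * Pi + B * Psi" "C * Pi + D * Psi = 0\<^sub>m p \<nu>"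
proof -
  obtain x u where x: "x \<in> carrier_vec n" and u: "u \<in> carrier_vec m" "u \<noteq> 0\<^sub>v m"
    and eq1: "A *\<^sub>v x + B *\<^sub>v u = lam \<cdot>\<^sub>v x" and eq2: "C *\<^sub>v x + D *\<^sub>v u = 0\<^sub>v p"
    using rosenbrock_kernel_vector[OF lam not_inj] by blast
  obtain w where w: "w \<in> carrier_vec \<nu>" "w \<noteq> 0\<^sub>v \<nu>" and Fw: "transpose_mat F *\<^sub>v w = lam \<cdot>\<^sub>v w"
    using ex_left_eigenvector[OF F lam] by blast
  have "outer_prod x w * F = outer_prod (lam \<cdot>\<^sub>v x) w"
    using outer_prod_mult_mat[OF x w(1) F] Fw x w by (intro eq_matI) auto
  also have "\<dots> = outer_prod (A *\<^sub>v x) w + outer_prod (B *\<^sub>v u) w"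
    unfolding eq1[symmetric] using A B x u w by (intro eq_matI) (auto simp: algebra_simps)
  also have "\<dots> = A * outer_prod x w + B * outer_prod u w"
    using mult_mat_outer_prod[OF A x w(1)] mult_mat_outer_prod[OF B u(1) w(1)] by simp
  finally have "outer_prod x w * F = A * outer_prod x w + B * outer_prod u w" .
  moreover have "C * outer_prod x w + D * outer_prod u w = outer_prod (C *\<^sub>v x + D *\<^sub>v u) w"
    using mult_mat_outer_prod[OF C x w(1)] mult_mat_outer_prod[OF D u(1) w(1)] C D x u w
    by (intro eq_matI) (auto simp: algebra_simps)
  moreover have "outer_prod (0\<^sub>v p) w = 0\<^sub>m p \<nu>" using w by (intro eq_matI) auto
  moreover have "outer_prod u w \<noteq> 0\<^sub>m m \<nu>" by (rule outer_prod_nonzero[OF u(1) w(1) u(2) w(2)])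
  ultimately show ?thesis
    using x u(1) w(1) eq2 by (intro that[of "outer_prod x w" "outer_prod u w"]) auto
qed

lemma SSC_p_eqI:
  assumes H: "H \<in> carrier_mat m \<nu>" and X: "X \<in> carrier_mat n \<nu>" "X * F - A * X = B * H"
  shows "SSC_p A B C D F H = C * X + D * H"
proof -
  have "\<exists>!Pi. Pi \<in> carrier_mat n \<nu> \<and> Pi * F - A * Pi = B * H"
    using B H by (intro sylvester_unique_solvable[OF A F disj]) auto
  then have "(THE Pi. Pi \<in> carrier_mat (dim_row A) (dim_row F) \<and> Pi * F - A * Pi = B * H) = X"
    using X A F by (intro the1_equality) auto
  then show ?thesis unfolding SSC_p_def Let_def by simp
qed

lemma SSC_p_sylvester_solution:
  assumes H: "H \<in> carrier_mat m \<nu>"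
  obtains X where "X \<in> carrier_mat n \<nu>" "X * F - A * X = B * H"
    "SSC_p A B C D F H = C * X + D * H"
proof -
  have "\<exists>!Pi. Pi \<in> carrier_mat n \<nu> \<and> Pi * F - A * Pi = B * H"
    using B H by (intro sylvester_unique_solvable[OF A F disj]) auto
  then obtain X where "X \<in> carrier_mat n \<nu>" "X * F - A * X = B * H" by blast
  with SSC_p_eqI[OF H] that show ?thesis by blast
qed

lemma SSC_p_carrier: "H \<in> carrier_mat m \<nu> \<Longrightarrow> SSC_p A B C D F H \<in> carrier_mat p \<nu>"
  using C D by (metis SSC_p_sylvester_solution add_carrier_mat mult_carrier_mat)

lemma SSC_d_eqI:
  assumes G: "G \<in> carrier_mat \<nu> p" and M: "M \<in> carrier_mat \<nu> n" "M * A - F * M = G * C"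
  shows "SSC_d A B C D F G = - (M * B) + G * D"
proof -
  have "\<exists>!M. M \<in> carrier_mat \<nu> n \<and> M * A - F * M = G * C"
    using C G by (intro sylvester_left_unique_solvable[OF A F disj]) auto
  then have "(THE M. M \<in> carrier_mat (dim_row F) (dim_row A) \<and> M * A - F * M = G * C) = M"
    using M A F by (intro the1_equality) auto
  then show ?thesis unfolding SSC_d_def Let_def by simp
qed

lemma SSC_d_sylvester_solution:
  assumes G: "G \<in> carrier_mat \<nu> p"
  obtains M where "M \<in> carrier_mat \<nu> n" "M * A - F * M = G * C"
    "SSC_d A B C D F G = - (M * B) + G * D"
proof -
  have "\<exists>!M. M \<in> carrier_mat \<nu> n \<and> M * A - F * M = G * C"
    using C G by (intro sylvester_left_unique_solvable[OF A F disj]) auto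
  then obtain M where "M \<in> carrier_mat \<nu> n" "M * A - F * M = G * C" by blast
  with SSC_d_eqI[OF G] that show ?thesis by blast
qed

lemma SSC_d_carrier: "G \<in> carrier_mat \<nu> p \<Longrightarrow> SSC_d A B C D F G \<in> carrier_mat \<nu> m"
  using B D by (metis SSC_d_sylvester_solution add_carrier_mat mult_carrier_mat uminus_carrier_mat)

lemma regulator_solutions_unique_iff:
  "(\<forall>lam\<in>eig F. rosenbrock_injective lam) \<longleftrightarrow>
   (\<forall>P \<in> carrier_mat n \<nu>. \<forall>Q \<in> carrier_mat p \<nu>.
     \<forall>Pi1 \<in> carrier_mat n \<nu>. \<forall>Psi1 \<in> carrier_mat m \<nu>. \<forall>Pi2 \<in> carrier_mat n \<nu>. \<forall>Psi2 \<in> carrier_mat m \<nu>.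
       Pi1 * F = A * Pi1 + B * Psi1 + P \<and> 0\<^sub>m p \<nu> = C * Pi1 + D * Psi1 + Q \<and>
       Pi2 * F = A * Pi2 + B * Psi2 + P \<and> 0\<^sub>m p \<nu> = C * Pi2 + D * Psi2 + Q
       \<longrightarrow> Pi1 = Pi2 \<and> Psi1 = Psi2)" (is "?inj \<longleftrightarrow> ?unique")
proof
  assume ?inj
  then have kernel: "\<And>lam x u. lam \<in> eig F \<Longrightarrow> x \<in> carrier_vec n \<Longrightarrow> u \<in> carrier_vec m \<Longrightarrow>
      A *\<^sub>v x + B *\<^sub>v u = lam \<cdot>\<^sub>v x \<Longrightarrow> C *\<^sub>v x + D *\<^sub>v u = 0\<^sub>v p \<Longrightarrow> x = 0\<^sub>v n \<and> u = 0\<^sub>v m"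
    unfolding rosenbrock_injective_def by blast
  show ?unique
  proof (intro ballI impI, elim conjE)
    fix P Q Pi1 Psi1 Pi2 Psi2
    assume "P \<in> carrier_mat n \<nu>" "Q \<in> carrier_mat p \<nu>" "Pi1 \<in> carrier_mat n \<nu>" "Psi1 \<in> carrier_mat m \<nu>"
      "Pi2 \<in> carrier_mat n \<nu>" "Psi2 \<in> carrier_mat m \<nu>"
      "Pi1 * F = A * Pi1 + B * Psi1 + P" "0\<^sub>m p \<nu> = C * Pi1 + D * Psi1 + Q"
      "Pi2 * F = A * Pi2 + B * Psi2 + P" "0\<^sub>m p \<nu> = C * Pi2 + D * Psi2 + Q"
    from coupled_sylvester_unique[OF F A B C D kernel this(3-6,1,2,7,9,8,10)]
    show "Pi1 = Pi2 \<and> Psi1 = Psi2" .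
  qed
next
  assume unique: ?unique
  show ?inj
  proof (rule ccontr)
    assume "\<not> ?inj"
    then obtain lam where "lam \<in> eig F" "\<not> rosenbrock_injective lam" by blast
    then obtain X Psi where X: "X \<in> carrier_mat n \<nu>" and Psi: "Psi \<in> carrier_mat m \<nu>" "Psi \<noteq> 0\<^sub>m m \<nu>"
      and eqs: "X * F = A * X + B * Psi" "C * X + D * Psi = 0\<^sub>m p \<nu>"
      by (rule homogeneous_regulator_nontrivial_solution)
    have "Psi = 0\<^sub>m m \<nu>"
      using unique[rule_format, OF zero_carrier_mat zero_carrier_mat X Psi(1) zero_carrier_mat zero_carrier_mat]
        eqs X Psi A B C D F by simp
    with Psi(2) show False ..
  qed
qed

lemma inj_on_SSC_p_iff:
  "inj_on (SSC_p A B C D F) (carrier_mat m \<nu>) \<longleftrightarrow> (\<forall>lam\<in>eig F. rosenbrock_injective lam)"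
proof
  assume inj: "inj_on (SSC_p A B C D F) (carrier_mat m \<nu>)"
  show "\<forall>lam\<in>eig F. rosenbrock_injective lam"
  proof (rule ccontr)
    assume "\<not> (\<forall>lam\<in>eig F. rosenbrock_injective lam)"
    then obtain lam where "lam \<in> eig F" "\<not> rosenbrock_injective lam" by blast
    then obtain X Psi where X: "X \<in> carrier_mat n \<nu>" and Psi: "Psi \<in> carrier_mat m \<nu>" "Psi \<noteq> 0\<^sub>m m \<nu>"
      and eqs: "X * F = A * X + B * Psi" "C * X + D * Psi = 0\<^sub>m p \<nu>"
      by (rule homogeneous_regulator_nontrivial_solution)
    have "X * F - A * X = B * Psi"
      using eqs(1) X Psi A B F by (auto simp: mat_eq_iff simp del: index_mult_mat(1))
    then have "SSC_p A B C D F Psi = 0\<^sub>m p \<nu>" using SSC_p_eqI[OF Psi(1) X] eqs(2) by simp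
    moreover have "SSC_p A B C D F (0\<^sub>m m \<nu>) = 0\<^sub>m p \<nu>"
      using SSC_p_eqI[of "0\<^sub>m m \<nu>" "0\<^sub>m n \<nu>"] A B C D F by simp
    ultimately have "Psi = 0\<^sub>m m \<nu>" using inj_onD[OF inj _ Psi(1)] by simp
    with Psi(2) show False ..
  qed
next
  assume "\<forall>lam\<in>eig F. rosenbrock_injective lam"
  then have kernel: "\<And>lam x u. lam \<in> eig F \<Longrightarrow> x \<in> carrier_vec n \<Longrightarrow> u \<in> carrier_vec m \<Longrightarrow>
      A *\<^sub>v x + B *\<^sub>v u = lam \<cdot>\<^sub>v x \<Longrightarrow> C *\<^sub>v x + D *\<^sub>v u = 0\<^sub>v p \<Longrightarrow> x = 0\<^sub>v n \<and> u = 0\<^sub>v m"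
    unfolding rosenbrock_injective_def by blast
  show "inj_on (SSC_p A B C D F) (carrier_mat m \<nu>)"
  proof (rule inj_onI)
    fix H1 H2 assume H: "H1 \<in> carrier_mat m \<nu>" "H2 \<in> carrier_mat m \<nu>"
      and same: "SSC_p A B C D F H1 = SSC_p A B C D F H2"
    obtain X1 where X1: "X1 \<in> carrier_mat n \<nu>" "X1 * F - A * X1 = B * H1"
      and S1: "SSC_p A B C D F H1 = C * X1 + D * H1"
      using SSC_p_sylvester_solution[OF H(1)] by blast
    obtain X2 where X2: "X2 \<in> carrier_mat n \<nu>" "X2 * F - A * X2 = B * H2"
      and S2: "SSC_p A B C D F H2 = C * X2 + D * H2"
      using SSC_p_sylvester_solution[OF H(2)] by blast
    define S where "S = SSC_p A B C D F H1"
    have S: "S \<in> carrier_mat p \<nu>" unfolding S_def S1 using X1 H C D by auto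
    have eq1: "Xk * F = A * Xk + B * Hk + 0\<^sub>m n \<nu>"
      if "Xk \<in> carrier_mat n \<nu>" "Hk \<in> carrier_mat m \<nu>" "Xk * F - A * Xk = B * Hk" for Xk Hk
      using that A B F by (auto simp: mat_eq_iff algebra_simps simp del: index_mult_mat(1))
    have eq2: "0\<^sub>m p \<nu> = C * Xk + D * Hk + - S" if "S = C * Xk + D * Hk" for Xk Hk
      using minus_r_inv_mat[OF S] minus_add_uminus_mat[OF S S] that by simp
    have "S = C * X2 + D * H2" unfolding S_def same S2 ..
    from coupled_sylvester_unique[OF F A B C D kernel X1(1) H(1) X2(1) H(2) zero_carrier_mat
        uminus_carrier_mat[OF S] eq1[OF X1(1) H(1) X1(2)] eq1[OF X2(1) H(2) X2(2)]
        eq2[OF S1[folded S_def]] eq2[OF this]]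
    show "H1 = H2" by (rule conjunct2)
  qed
qed

lemma dual_regulator_solvable:
  assumes inj: "\<forall>lam\<in>eig F. rosenbrock_injective lam"
    and Pb: "Pb \<in> carrier_mat \<nu> n" and Qb: "Qb \<in> carrier_mat \<nu> m"
  shows "\<exists>M \<in> carrier_mat \<nu> n. \<exists>G \<in> carrier_mat \<nu> p.
    M * A = F * M + G * C + Pb \<and> 0\<^sub>m \<nu> m = - (M * B) + G * D + Qb"
proof -
  have "\<exists>x\<in>carrier_vec n. \<exists>y\<in>carrier_vec p.
      transpose_mat A *\<^sub>v x + transpose_mat C *\<^sub>v y = lam \<cdot>\<^sub>v x + b1 \<and>
      transpose_mat B *\<^sub>v x + transpose_mat D *\<^sub>v y = b2"
    if "lam \<in> eig (transpose_mat F)" "b1 \<in> carrier_vec n" "b2 \<in> carrier_vec m" for lam b1 b2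
    using that inj transpose_rosenbrock_solvable eig_transpose_mat[OF F] by simp
  then obtain X Y where X: "X \<in> carrier_mat n \<nu>" and Y: "Y \<in> carrier_mat p \<nu>"
    and eq1: "transpose_mat A * X + transpose_mat C * Y = X * transpose_mat F + transpose_mat Pb"
    and eq2: "transpose_mat B * X + transpose_mat D * Y = transpose_mat Qb"
    using coupled_sylvester_solvable[of "transpose_mat F" \<nu> "transpose_mat A" n "transpose_mat C" p
        "transpose_mat B" m "transpose_mat D" "transpose_mat Pb" "transpose_mat Qb"] A B C D F Pb Qb
    by auto
  have "transpose_mat X * A + transpose_mat Y * C = F * transpose_mat X + Pb"
    using arg_cong[OF eq1, of transpose_mat] X Y A C F Pb
    by (simp add: transpose_add[of _ n \<nu>] transpose_mult[of _ n n] transpose_mult[of _ n p]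
      transpose_mult[of _ n \<nu>])
  moreover have "transpose_mat X * B + transpose_mat Y * D = Qb"
    using arg_cong[OF eq2, of transpose_mat] X Y B D Qb
    by (simp add: transpose_add[of _ m \<nu>] transpose_mult[of _ m n] transpose_mult[of _ m p])
  ultimately have "transpose_mat X * A = F * transpose_mat X + (- transpose_mat Y) * C + Pb"
    and "0\<^sub>m \<nu> m = - (transpose_mat X * B) + (- transpose_mat Y) * D + Qb"
    using X Y A B C D F Pb Qb by (auto simp: mat_eq_iff algebra_simps simp del: index_mult_mat(1))
  moreover have "transpose_mat X \<in> carrier_mat \<nu> n" "- transpose_mat Y \<in> carrier_mat \<nu> p" using X Y by auto
  ultimately show ?thesis by blast
qed

lemma SSC_d_surj_if_dual_regulator_solvable:
  assumes solvable: "\<forall>Pb \<in> carrier_mat \<nu> n. \<forall>Qb \<in> carrier_mat \<nu> m.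
    \<exists>M \<in> carrier_mat \<nu> n. \<exists>G \<in> carrier_mat \<nu> p.
      M * A = F * M + G * C + Pb \<and> 0\<^sub>m \<nu> m = - (M * B) + G * D + Qb"
  shows "SSC_d A B C D F ` carrier_mat \<nu> p = carrier_mat \<nu> m"
proof
  show "SSC_d A B C D F ` carrier_mat \<nu> p \<subseteq> carrier_mat \<nu> m"
    using SSC_d_carrier by auto
  show "carrier_mat \<nu> m \<subseteq> SSC_d A B C D F ` carrier_mat \<nu> p"
  proof
    fix Z :: "complex mat" assume Z: "Z \<in> carrier_mat \<nu> m"
    then obtain M G where M: "M \<in> carrier_mat \<nu> n" and G: "G \<in> carrier_mat \<nu> p"
      and eq1: "M * A = F * M + G * C + 0\<^sub>m \<nu> n" and eq2: "0\<^sub>m \<nu> m = - (M * B) + G * D + - Z"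
      using solvable by (meson uminus_carrier_mat zero_carrier_mat)
    have "M * A - F * M = G * C"
      using eq1 M G A C F by (auto simp: mat_eq_iff simp del: index_mult_mat(1))
    then have "SSC_d A B C D F G = - (M * B) + G * D" by (rule SSC_d_eqI[OF G M])
    also have "\<dots> = Z" using eq2 M G B D Z by (auto simp: mat_eq_iff simp del: index_mult_mat(1))
    finally show "Z \<in> SSC_d A B C D F ` carrier_mat \<nu> p" using G by blast
  qed
qed

text \<open>If \<open>R\<^sub>\<Sigma>(\<lambda>)\<close> has a kernel vector \<open>(x, u)\<close> with \<open>u \<noteq> 0\<close> and \<open>w\<close> is a left eigenvector of \<open>F\<close>
  for \<open>\<lambda>\<close>, then every \<open>C\<^sub>d(G)\<close> maps \<open>u\<close> into the range of \<open>F - \<lambda> I\<close>, which \<open>w\<close> annihilates;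
  the rank-one matrix \<open>conj w (conj u)\<^sup>T\<close> is therefore not in the image of \<open>C\<^sub>d\<close>.\<close>

lemma rosenbrock_injective_if_SSC_d_surj:
  assumes surj: "SSC_d A B C D F ` carrier_mat \<nu> p = carrier_mat \<nu> m"
  shows "\<forall>lam\<in>eig F. rosenbrock_injective lam"
proof (rule ccontr)
  assume "\<not> (\<forall>lam\<in>eig F. rosenbrock_injective lam)"
  then obtain lam where lam: "lam \<in> eig F" "\<not> rosenbrock_injective lam" by blast
  obtain x u where x: "x \<in> carrier_vec n" and u: "u \<in> carrier_vec m" "u \<noteq> 0\<^sub>v m"
    and eq1: "A *\<^sub>v x + B *\<^sub>v u = lam \<cdot>\<^sub>v x" and eq2: "C *\<^sub>v x + D *\<^sub>v u = 0\<^sub>v p"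
    using rosenbrock_kernel_vector[OF lam] by blast
  obtain w where w: "w \<in> carrier_vec \<nu>" "w \<noteq> 0\<^sub>v \<nu>" and Fw: "transpose_mat F *\<^sub>v w = lam \<cdot>\<^sub>v w"
    using ex_left_eigenvector[OF F lam(1)] by blast
  define Z where "Z = outer_prod (conjugate w) (conjugate u)"
  have "Z \<in> carrier_mat \<nu> m" unfolding Z_def using u w by simp
  then have "Z \<in> SSC_d A B C D F ` carrier_mat \<nu> p" unfolding surj .
  then obtain G where G: "G \<in> carrier_mat \<nu> p" and GZ: "Z = SSC_d A B C D F G" by (rule imageE)
  obtain M where M: "M \<in> carrier_mat \<nu> n" and MA: "M * A - F * M = G * C"
    and "SSC_d A B C D F G = - (M * B) + G * D"
    by (rule SSC_d_sylvester_solution[OF G])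
  with GZ have Z: "Z = - (M * B) + G * D" by simp
  define y where "y = M *\<^sub>v x"
  have y: "y \<in> carrier_vec \<nu>" unfolding y_def using M x by simp
  have "Z *\<^sub>v u = - (M *\<^sub>v (B *\<^sub>v u)) + G *\<^sub>v (D *\<^sub>v u)"
    unfolding Z using M G B D u
    by (simp add: add_mult_distrib_mat_vec[of _ \<nu> m] assoc_mult_mat_vec[of _ \<nu> n _ m]
      assoc_mult_mat_vec[of _ \<nu> p _ m])
  also have "M *\<^sub>v (B *\<^sub>v u) = lam \<cdot>\<^sub>v y - M *\<^sub>v (A *\<^sub>v x)"
  proof -
    have "B *\<^sub>v u = lam \<cdot>\<^sub>v x - A *\<^sub>v x"
      using eq1 A B x u by (auto simp: vec_eq_iff algebra_simps simp del: index_mult_mat_vec)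
    then show ?thesis
      unfolding y_def using M A x by (simp add: mult_minus_distrib_mat_vec[of _ \<nu> n] mult_mat_vec)
  qed
  also have "G *\<^sub>v (D *\<^sub>v u) = - (G *\<^sub>v (C *\<^sub>v x))"
  proof -
    have "D *\<^sub>v u = - (C *\<^sub>v x)"
      using eq2 C D x u by (auto simp: vec_eq_iff eq_neg_iff_add_eq_0 add.commute simp del: index_mult_mat_vec)
    then show ?thesis using G C x by (simp add: mult_mat_vec_uminus[OF G])
  qed
  also have "M *\<^sub>v (A *\<^sub>v x) = F *\<^sub>v y + G *\<^sub>v (C *\<^sub>v x)"
  proof -
    have "(M * A - F * M) *\<^sub>v x = G *\<^sub>v (C *\<^sub>v x)"
      unfolding MA using G C x by (simp add: assoc_mult_mat_vec[of _ \<nu> p _ n])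
    then show ?thesis
      unfolding y_def using M A F x
      by (auto simp: minus_mult_distrib_mat_vec[of _ \<nu> n] assoc_mult_mat_vec[of _ \<nu> n _ n]
        assoc_mult_mat_vec[of _ \<nu> \<nu> _ n] vec_eq_iff algebra_simps simp del: index_mult_mat_vec)
  qed
  finally have "Z *\<^sub>v u = F *\<^sub>v y - lam \<cdot>\<^sub>v y"
    using F G C x y by (auto simp: vec_eq_iff algebra_simps simp del: index_mult_mat_vec)
  then have "w \<bullet> (Z *\<^sub>v u) = 0" using left_eigenvector_orthogonal[OF F w(1) y Fw] by simp
  moreover have "w \<bullet> (Z *\<^sub>v u) = (u \<bullet>c u) * (w \<bullet>c w)"
  proof -
    have "Z *\<^sub>v u = (conjugate u \<bullet> u) \<cdot>\<^sub>v conjugate w"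
      unfolding Z_def using u w by (simp add: outer_prod_mult_mat_vec[of _ \<nu> _ m])
    then show ?thesis using u w by (simp add: comm_scalar_prod[of "conjugate u" m] comm_scalar_prod[of w \<nu>])
  qed
  moreover have "u \<bullet>c u \<noteq> 0" "w \<bullet>c w \<noteq> 0" using u w by auto
  ultimately show False by simp
qed

lemma dual_regulator_solvable_iff:
  "(\<forall>lam\<in>eig F. rosenbrock_injective lam) \<longleftrightarrow>
   (\<forall>Pb \<in> carrier_mat \<nu> n. \<forall>Qb \<in> carrier_mat \<nu> m. \<exists>M \<in> carrier_mat \<nu> n. \<exists>G \<in> carrier_mat \<nu> p.
      M * A = F * M + G * C + Pb \<and> 0\<^sub>m \<nu> m = - (M * B) + G * D + Qb)"
proof
  assume "\<forall>lam\<in>eig F. rosenbrock_injective lam"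
  then show "\<forall>Pb \<in> carrier_mat \<nu> n. \<forall>Qb \<in> carrier_mat \<nu> m. \<exists>M \<in> carrier_mat \<nu> n. \<exists>G \<in> carrier_mat \<nu> p.
      M * A = F * M + G * C + Pb \<and> 0\<^sub>m \<nu> m = - (M * B) + G * D + Qb"
    using dual_regulator_solvable by blast
next
  assume "\<forall>Pb \<in> carrier_mat \<nu> n. \<forall>Qb \<in> carrier_mat \<nu> m. \<exists>M \<in> carrier_mat \<nu> n. \<exists>G \<in> carrier_mat \<nu> p.
      M * A = F * M + G * C + Pb \<and> 0\<^sub>m \<nu> m = - (M * B) + G * D + Qb"
  then show "\<forall>lam\<in>eig F. rosenbrock_injective lam"
    by (intro rosenbrock_injective_if_SSC_d_surj SSC_d_surj_if_dual_regulator_solvable)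
qed

lemma SSC_d_surj_iff:
  "SSC_d A B C D F ` carrier_mat \<nu> p = carrier_mat \<nu> m \<longleftrightarrow> (\<forall>lam\<in>eig F. rosenbrock_injective lam)"
  using rosenbrock_injective_if_SSC_d_surj SSC_d_surj_if_dual_regulator_solvable
    dual_regulator_solvable_iff by blast

lemma SSC_p_mult_eigenvector:
  assumes H: "H \<in> carrier_mat m \<nu>" and ev: "eigenvector F f lam"
  obtains x where "x \<in> carrier_vec n" "A *\<^sub>v x + B *\<^sub>v (H *\<^sub>v f) = lam \<cdot>\<^sub>v x"
    "SSC_p A B C D F H *\<^sub>v f = C *\<^sub>v x + D *\<^sub>v (H *\<^sub>v f)"
proof -
  obtain X where X: "X \<in> carrier_mat n \<nu>" "X * F - A * X = B * H"
    and S: "SSC_p A B C D F H = C * X + D * H"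
    using SSC_p_sylvester_solution[OF H] by blast
  have f: "f \<in> carrier_vec \<nu>" and Ff: "F *\<^sub>v f = lam \<cdot>\<^sub>v f"
    using ev F unfolding eigenvector_def by auto
  have "(X * F - A * X) *\<^sub>v f = lam \<cdot>\<^sub>v (X *\<^sub>v f) - A *\<^sub>v (X *\<^sub>v f)"
    using X(1) F A f Ff
    by (simp add: minus_mult_distrib_mat_vec[of _ n \<nu>] assoc_mult_mat_vec[of _ n \<nu>] mult_mat_vec)
  moreover have "(B * H) *\<^sub>v f = B *\<^sub>v (H *\<^sub>v f)" using B H f by (simp add: assoc_mult_mat_vec)
  ultimately have "A *\<^sub>v (X *\<^sub>v f) + B *\<^sub>v (H *\<^sub>v f) = lam \<cdot>\<^sub>v (X *\<^sub>v f)"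
    unfolding X(2) using X A B H f by (auto simp: vec_eq_iff algebra_simps simp del: index_mult_mat_vec)
  moreover have "SSC_p A B C D F H *\<^sub>v f = C *\<^sub>v (X *\<^sub>v f) + D *\<^sub>v (H *\<^sub>v f)"
    unfolding S using X C D H f
    by (simp add: add_mult_distrib_mat_vec[of _ p \<nu>] assoc_mult_mat_vec[of _ p n] assoc_mult_mat_vec[of _ p m])
  moreover have "X *\<^sub>v f \<in> carrier_vec n" using X f by simp
  ultimately show ?thesis using that by blast
qed

lemma eigenvalue_mem_eig: "eigenvector F f lam \<Longrightarrow> lam \<in> eig F"
  unfolding eig_def eigenvalue_def by auto

lemma observable_on_SSC_p:
  assumes H: "H \<in> carrier_mat m \<nu>" and obs: "observable_on S F H"
    and inj: "\<forall>lam\<in>eig F \<inter> S. rosenbrock_injective lam"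
  shows "observable_on S F (SSC_p A B C D F H)"
  unfolding observable_on_def
proof (intro ballI allI impI)
  fix lam f assume lam: "lam \<in> S" and ev: "eigenvector F f lam"
  obtain x where x: "x \<in> carrier_vec n" and eq1: "A *\<^sub>v x + B *\<^sub>v (H *\<^sub>v f) = lam \<cdot>\<^sub>v x"
    and S: "SSC_p A B C D F H *\<^sub>v f = C *\<^sub>v x + D *\<^sub>v (H *\<^sub>v f)"
    using SSC_p_mult_eigenvector[OF H ev] by blast
  have "H *\<^sub>v f \<noteq> 0\<^sub>v m" using obs lam ev H unfolding observable_on_def by auto
  moreover have "H *\<^sub>v f \<in> carrier_vec m" using H ev F unfolding eigenvector_def by auto
  ultimately have "C *\<^sub>v x + D *\<^sub>v (H *\<^sub>v f) \<noteq> 0\<^sub>v p"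
    using inj eigenvalue_mem_eig[OF ev] lam x eq1 unfolding rosenbrock_injective_def by blast
  then show "SSC_p A B C D F H *\<^sub>v f \<noteq> 0\<^sub>v (dim_row (SSC_p A B C D F H))"
    using S SSC_p_carrier[OF H] by simp
qed

lemma observable_on_if_observable_on_SSC_p:
  assumes H: "H \<in> carrier_mat m \<nu>" and obs: "observable_on S F (SSC_p A B C D F H)"
  shows "observable_on S F H"
  unfolding observable_on_def
proof (intro ballI allI impI notI)
  fix lam f assume lam: "lam \<in> S" and ev: "eigenvector F f lam" and "H *\<^sub>v f = 0\<^sub>v (dim_row H)"
  then have Hf: "H *\<^sub>v f = 0\<^sub>v m" using H by simp
  obtain x where x: "x \<in> carrier_vec n" and eq1: "A *\<^sub>v x + B *\<^sub>v (H *\<^sub>v f) = lam \<cdot>\<^sub>v x"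
    and S: "SSC_p A B C D F H *\<^sub>v f = C *\<^sub>v x + D *\<^sub>v (H *\<^sub>v f)"
    using SSC_p_mult_eigenvector[OF H ev] by blast
  have "A *\<^sub>v x = lam \<cdot>\<^sub>v x" using eq1 A B x unfolding Hf by simp
  then have "x = 0\<^sub>v n" using eig_F_eigenvector_of_A_trivial[OF eigenvalue_mem_eig[OF ev] x] by simp
  then have "SSC_p A B C D F H *\<^sub>v f = 0\<^sub>v (dim_row (SSC_p A B C D F H))"
    using S C D SSC_p_carrier[OF H] unfolding Hf by simp
  moreover have "SSC_p A B C D F H *\<^sub>v f \<noteq> 0\<^sub>v (dim_row (SSC_p A B C D F H))"
    using obs lam ev unfolding observable_on_def by auto
  ultimately show False by contradiction
qed

lemma rosenbrock_injective_if_SSC_p_nonvanishing: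
  assumes H: "H \<in> carrier_mat m \<nu>" and lam: "lam \<in> eig F"
    and surj: "(\<lambda>f. H *\<^sub>v f) ` eigspace F lam = carrier_vec m"
    and nonvanishing: "\<And>f. eigenvector F f lam \<Longrightarrow> SSC_p A B C D F H *\<^sub>v f \<noteq> 0\<^sub>v p"
  shows "rosenbrock_injective lam"
  unfolding rosenbrock_injective_def
proof (intro ballI impI)
  fix x0 u0 assume x0: "x0 \<in> carrier_vec n" and u0: "u0 \<in> carrier_vec m"
    and eqs: "A *\<^sub>v x0 + B *\<^sub>v u0 = lam \<cdot>\<^sub>v x0 \<and> C *\<^sub>v x0 + D *\<^sub>v u0 = 0\<^sub>v p"
  have "u0 \<in> (\<lambda>f. H *\<^sub>v f) ` eigspace F lam" using surj u0 by simp
  then obtain f where f: "f \<in> eigspace F lam" and Hf: "H *\<^sub>v f = u0" by (auto simp: image_iff)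
  have fc: "f \<in> carrier_vec \<nu>" and Ff: "F *\<^sub>v f = lam \<cdot>\<^sub>v f" using eigspaceD[OF F f] by auto
  show "x0 = 0\<^sub>v n \<and> u0 = 0\<^sub>v m"
  proof (cases "f = 0\<^sub>v \<nu>")
    case True
    then have "u0 = 0\<^sub>v m" using Hf H by simp
    with eqs A B x0 have "A *\<^sub>v x0 = lam \<cdot>\<^sub>v x0" by simp
    with \<open>u0 = 0\<^sub>v m\<close> show ?thesis using eig_F_eigenvector_of_A_trivial[OF lam x0] by simp
  next
    case False
    then have ev: "eigenvector F f lam" unfolding eigenvector_def using fc Ff F by auto
    obtain x where x: "x \<in> carrier_vec n" and eq1: "A *\<^sub>v x + B *\<^sub>v u0 = lam \<cdot>\<^sub>v x"
      and S: "SSC_p A B C D F H *\<^sub>v f = C *\<^sub>v x + D *\<^sub>v u0"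
      using SSC_p_mult_eigenvector[OF H ev] unfolding Hf by blast
    have Ax: "A *\<^sub>v x = lam \<cdot>\<^sub>v x - B *\<^sub>v u0"
      using eq1 A B x u0 by (auto simp: vec_eq_iff algebra_simps simp del: index_mult_mat_vec)
    have Ax0: "A *\<^sub>v x0 = lam \<cdot>\<^sub>v x0 - B *\<^sub>v u0"
      using eqs A B x0 u0 by (auto simp: vec_eq_iff algebra_simps simp del: index_mult_mat_vec)
    have "A *\<^sub>v (x - x0) = lam \<cdot>\<^sub>v (x - x0)"
      unfolding mult_minus_distrib_mat_vec[OF A x x0] Ax Ax0
      using B x x0 u0 by (auto simp: vec_eq_iff algebra_simps simp del: index_mult_mat_vec)
    then have "x - x0 = 0\<^sub>v n" using eig_F_eigenvector_of_A_trivial[OF lam] x x0 by simp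
    then have "x = x0" using x x0 by (auto simp: vec_eq_iff)
    then have "SSC_p A B C D F H *\<^sub>v f = 0\<^sub>v p" using S eqs by simp
    with nonvanishing[OF ev] show ?thesis ..
  qed
qed

lemma observable_on_SSC_p_iff:
  assumes H: "H \<in> carrier_mat m \<nu>"
    and surj: "\<forall>lam\<in>eig F \<inter> S. (\<lambda>f. H *\<^sub>v f) ` eigspace F lam = carrier_vec m"
  shows "observable_on S F (SSC_p A B C D F H) \<longleftrightarrow>
    observable_on S F H \<and> (\<forall>lam\<in>eig F \<inter> S. rosenbrock_injective lam)"
proof
  assume obs: "observable_on S F (SSC_p A B C D F H)"
  have "SSC_p A B C D F H *\<^sub>v f \<noteq> 0\<^sub>v p" if "lam \<in> S" "eigenvector F f lam" for lam f
    using obs that SSC_p_carrier[OF H] unfolding observable_on_def by auto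
  then show "observable_on S F H \<and> (\<forall>lam\<in>eig F \<inter> S. rosenbrock_injective lam)"
    using observable_on_if_observable_on_SSC_p[OF H obs] rosenbrock_injective_if_SSC_p_nonvanishing[OF H]
      surj by blast
qed (use observable_on_SSC_p[OF H] in blast)

end

theorem theorem2:
  fixes A B C D F :: "complex mat" and n m p \<nu> :: nat
  assumes A: "A \<in> carrier_mat n n" and B: "B \<in> carrier_mat n m"
    and C: "C \<in> carrier_mat p n" and D: "D \<in> carrier_mat p m"
    and F: "F \<in> carrier_mat \<nu> \<nu>"
    and disj: "eig A \<inter> eig F = {}"
  defines "cond_i \<equiv> (\<forall>lam\<in>eig F. full_col_rank (rosenbrock A B C D lam))"
    and "cond_ii \<equiv> (\<forall>P \<in> carrier_mat n \<nu>. \<forall>Q \<in> carrier_mat p \<nu>.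
            \<forall>Pi1 \<in> carrier_mat n \<nu>. \<forall>Psi1 \<in> carrier_mat m \<nu>.
            \<forall>Pi2 \<in> carrier_mat n \<nu>. \<forall>Psi2 \<in> carrier_mat m \<nu>.
              Pi1 * F = A * Pi1 + B * Psi1 + P \<and> 0\<^sub>m p \<nu> = C * Pi1 + D * Psi1 + Q \<and>
              Pi2 * F = A * Pi2 + B * Psi2 + P \<and> 0\<^sub>m p \<nu> = C * Pi2 + D * Psi2 + Q
              \<longrightarrow> Pi1 = Pi2 \<and> Psi1 = Psi2)"
    and "cond_iii \<equiv> (\<forall>Pb \<in> carrier_mat \<nu> n. \<forall>Qb \<in> carrier_mat \<nu> m.
            \<exists>M \<in> carrier_mat \<nu> n. \<exists>G \<in> carrier_mat \<nu> p.
              M * A = F * M + G * C + Pb \<and> 0\<^sub>m \<nu> m = - (M * B) + G * D + Qb)"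
    and "cond_iv \<equiv> inj_on (SSC_p A B C D F) (carrier_mat m \<nu>)"
    and "cond_v \<equiv> (SSC_d A B C D F ` carrier_mat \<nu> p = carrier_mat \<nu> m)"
  shows "(cond_i \<longleftrightarrow> cond_ii) \<and> (cond_i \<longleftrightarrow> cond_iii) \<and> (cond_i \<longleftrightarrow> cond_iv) \<and> (cond_i \<longleftrightarrow> cond_v) \<and>
    (\<forall>H \<in> carrier_mat m \<nu>.
      (observable_pair F H \<and> cond_i \<longrightarrow> observable_pair F (SSC_p A B C D F H)) \<and>
      (detectable_pair F H \<and> (\<forall>lam\<in>eig F. Re lam \<ge> 0 \<longrightarrow> full_col_rank (rosenbrock A B C D lam))
         \<longrightarrow> detectable_pair F (SSC_p A B C D F H)) \<and>
      ((\<forall>lam\<in>eig F. (\<lambda>f. H *\<^sub>v f) ` eigspace F lam = carrier_vec m) \<longrightarrow>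
         observable_pair F (SSC_p A B C D F H) \<longrightarrow> observable_pair F H \<and> cond_i) \<and>
      ((\<forall>lam\<in>eig F. Re lam \<ge> 0 \<longrightarrow> (\<lambda>f. H *\<^sub>v f) ` eigspace F lam = carrier_vec m) \<longrightarrow>
         detectable_pair F (SSC_p A B C D F H) \<longrightarrow>
         detectable_pair F H \<and> (\<forall>lam\<in>eig F. Re lam \<ge> 0 \<longrightarrow> full_col_rank (rosenbrock A B C D lam))))"
proof -
  interpret exosystem_setting A B C D F n m p \<nu>
    using A B C D F disj by unfold_locales
  let ?S = "{lam. 0 \<le> Re lam}"
  have i: "cond_i \<longleftrightarrow> (\<forall>lam\<in>eig F \<inter> UNIV. rosenbrock_injective lam)"
    unfolding cond_i_def full_col_rank_rosenbrock_iff by simp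
  have i_stable: "(\<forall>lam\<in>eig F. Re lam \<ge> 0 \<longrightarrow> full_col_rank (rosenbrock A B C D lam)) \<longleftrightarrow>
      (\<forall>lam\<in>eig F \<inter> ?S. rosenbrock_injective lam)"
    unfolding full_col_rank_rosenbrock_iff by auto
  have "(cond_i \<longleftrightarrow> cond_ii) \<and> (cond_i \<longleftrightarrow> cond_iii) \<and> (cond_i \<longleftrightarrow> cond_iv) \<and> (cond_i \<longleftrightarrow> cond_v)"
    unfolding i cond_ii_def cond_iii_def cond_iv_def cond_v_def
    using regulator_solutions_unique_iff dual_regulator_solvable_iff inj_on_SSC_p_iff SSC_d_surj_iff
    by simp
  moreover have "(observable_pair F H \<and> cond_i \<longrightarrow> observable_pair F (SSC_p A B C D F H)) \<and>
      (detectable_pair F H \<and> (\<forall>lam\<in>eig F. Re lam \<ge> 0 \<longrightarrow> full_col_rank (rosenbrock A B C D lam))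
         \<longrightarrow> detectable_pair F (SSC_p A B C D F H)) \<and>
      ((\<forall>lam\<in>eig F. (\<lambda>f. H *\<^sub>v f) ` eigspace F lam = carrier_vec m) \<longrightarrow>
         observable_pair F (SSC_p A B C D F H) \<longrightarrow> observable_pair F H \<and> cond_i) \<and>
      ((\<forall>lam\<in>eig F. Re lam \<ge> 0 \<longrightarrow> (\<lambda>f. H *\<^sub>v f) ` eigspace F lam = carrier_vec m) \<longrightarrow>
         detectable_pair F (SSC_p A B C D F H) \<longrightarrow>
         detectable_pair F H \<and> (\<forall>lam\<in>eig F. Re lam \<ge> 0 \<longrightarrow> full_col_rank (rosenbrock A B C D lam)))"
    if H: "H \<in> carrier_mat m \<nu>" for H
    unfolding i i_stable observable_pair_iff_observable_on detectable_pair_iff_observable_on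
    using observable_on_SSC_p[OF H, of UNIV] observable_on_SSC_p[OF H, of ?S]
      observable_on_SSC_p_iff[OF H, of UNIV] observable_on_SSC_p_iff[OF H, of ?S]
    by simp
  ultimately show ?thesis by blast
qed

end
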